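(* Let $L$ be a split regular Hom-Lie color algebra with symmetric root system $\Lambda$. If $\mathrm{Z}(L)=0$ and $[L,L]=L$, then $$L=\bigoplus_{[\alpha]\in\Lambda/\sim}I_{[\alpha]},$$ where $I_{[\alpha]}:=L_{\Lambda_\alpha}$ are ideals of $L$ with $[I_{[\alpha]},I_{[\beta]}]=0$ for $[\alpha]\neq[\beta]$.
   Context: Let $\mathbb{K}$ be a field and $\Gamma$ an abelian group. A bi-character is $\varepsilon:\Gamma\times\Gamma\to\mathbb{K}\setminus\{0\}$ with $\varepsilon(a,b)\varepsilon(b,a)=1$, $\varepsilon(a,b+c)=\varepsilon(a,b)\varepsilon(a,c)$, $\varepsilon(a+b,c)=\varepsilon(a,c)\varepsilon(b,c)$. A Hom-Lie color algebra $(L,[\cdot,\cdot],\phi,\varepsilon)$ is a $\Gamma$-graded space $L=\bigoplus_gL_g$ with bilinear $[\cdot,\cdot]$, $[L_g,L_h]\subset L_{g+h}$, linear $\phi$ with $\phi(L_g)\subset L_g$, $\phi([x,y])=[\phi x,\phi y]$, such that for homogeneous $x,y,z$ of degrees $\bar x,\bar y,\bar z$: $[x,y]=-\varepsilon(\bar x,\bar y)[y,x]$ and $\varepsilon(\bar z,\bar x)[\phi(x),[y,z]]+\varepsilon(\bar x,\bar y)[\phi(y),[z,x]]+\varepsilon(\bar y,\bar z)[\phi(z),[x,y]]=0$; regular means $\phi$ bijective. A subalgebra is a graded subspace $A$ with $[A,A]\subset A$, $\phi(A)=A$; abelian if $[A,A]=0$. An ideal is a graded subspace $I$ with $[I,L]\subset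 I$ and $\phi(I)=I$. The annihilator is $\mathrm{Z}(L)=\{x\in L:[x,L]=0\}$. $H=\bigoplus_gH_g$ is a maximal abelian graded subalgebra (so $\phi(H_0)=H_0$). For linear $\alpha:H_0\to\mathbb{K}$, $L_\alpha=\{v:[h,v]=\alpha(h)\phi(v)\ \forall h\in H_0\}$; $\Lambda=\{\alpha\in H_0^*\setminus\{0\}:L_\alpha\neq0\}$; $L$ is split if $L=H\oplus(\bigoplus_{\alpha\in\Lambda}L_\alpha)$. $\Lambda$ is symmetric if $\alpha\in\Lambda\Rightarrow-\alpha\in\Lambda$. For $z\in\mathbb{Z}$, $\alpha\phi^{z}:=\alpha\circ(\phi|_{H_0})^{z}$; $\mathbb{N}=\{0,1,2,\dots\}$. Connection: for $\alpha,\beta\in\Lambda$, $\alpha$ is connected to $\beta$ if there exist $k\ge1$ and $\alpha_1,\dots,\alpha_k\in\Lambda$ such that: if $k=1$, $\alpha_1\in\{\alpha\phi^{-n}:n\in\mathbb{N}\}\cap\{\pm\beta\phi^{-m}:m\in\mathbb{N}\}$; if $k\ge2$, then $\alpha_1\in\{\alpha\phi^{-n}:n\in\mathbb{N}\}$, for each $i=1,\dots,k-2$ one has $\alpha_1\phi^{-i}+\alpha_2\phi^{-i}+\alpha_3\phi^{-i+1}+\cdots+\alpha_{i+1}\phi^{-1}\in\Lambda$, and $\alpha_1\phi^{-k+1}+\alpha_2\phi^{-k+1}+\alpha_3\phi^{-k+2}+\cdots+\alpha_k\phi^{-1}\in\{\pm\beta\phi^{-m}:m\in\mathbb{N}\}$.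 Connectedness $\sim$ is an equivalence relation on $\Lambda$; $\Lambda_\alpha:=\{\beta\in\Lambda:\beta\sim\alpha\}$. Define $H_{\Lambda_\alpha}:=\mathrm{span}_{\mathbb{K}}\{[L_\beta,L_{-\beta}]:\beta\in\Lambda_\alpha\}\subset H$, $V_{\Lambda_\alpha}:=\bigoplus_{\beta\in\Lambda_\alpha}L_\beta$, and $L_{\Lambda_\alpha}:=H_{\Lambda_\alpha}\oplus V_{\Lambda_\alpha}$. *)

theory Defs
  imports Complex_Main
begin

text \<open>Setting: L is the whole carrier type 'v, a vector space over the field 'k
  (via scalar multiplication sc), graded by the abelian group 'g via the family Lg.\<close>

definition bicharacter :: "('g::ab_group_add \<Rightarrow> 'g \<Rightarrow> 'k::field) \<Rightarrow> bool" where
  "bicharacter eps \<longleftrightarrow>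
     (\<forall>a b. eps a b \<noteq> 0) \<and>
     (\<forall>a b. eps a b * eps b a = 1) \<and>
     (\<forall>a b c. eps a (b + c) = eps a b * eps a c) \<and>
     (\<forall>a b c. eps (a + b) c = eps a c * eps b c)"

definition internal_direct_sum ::
  "('k::field \<Rightarrow> 'v::ab_group_add \<Rightarrow> 'v) \<Rightarrow> 'i set \<Rightarrow> ('i \<Rightarrow> 'v set) \<Rightarrow> 'v set \<Rightarrow> bool" where
  "internal_direct_sum sc I V W \<longleftrightarrow>
     (\<forall>i\<in>I. module.subspace sc (V i)) \<and>
     (\<forall>F v. finite F \<and> F \<subseteq> I \<and> (\<forall>i\<in>F. v i \<in> V i) \<and> sum v F = 0 \<longrightarrow> (\<forall>i\<in>F. v i = 0)) \<and>
     W = module.span sc (\<Union>i\<in>I. V i)"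

definition hom_lie_color_algebra ::
  "('k::field \<Rightarrow> 'v::ab_group_add \<Rightarrow> 'v) \<Rightarrow> ('g::ab_group_add \<Rightarrow> 'v set) \<Rightarrow>
   ('v \<Rightarrow> 'v \<Rightarrow> 'v) \<Rightarrow> ('v \<Rightarrow> 'v) \<Rightarrow> ('g \<Rightarrow> 'g \<Rightarrow> 'k) \<Rightarrow> bool" where
  "hom_lie_color_algebra sc Lg br phi eps \<longleftrightarrow>
     vector_space sc \<and>
     internal_direct_sum sc UNIV Lg UNIV \<and>
     bicharacter eps \<and>
     (\<forall>x. Vector_Spaces.linear sc sc (br x)) \<and>
     (\<forall>y. Vector_Spaces.linear sc sc (\<lambda>x. br x y)) \<and>
     (\<forall>g h. \<forall>x\<in>Lg g. \<forall>y\<in>Lg h. br x y \<in> Lg (g + h)) \<and>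
     Vector_Spaces.linear sc sc phi \<and>
     (\<forall>g. phi ` Lg g \<subseteq> Lg g) \<and>
     (\<forall>x y. phi (br x y) = br (phi x) (phi y)) \<and>
     (\<forall>a b. \<forall>x\<in>Lg a. \<forall>y\<in>Lg b. br x y = - sc (eps a b) (br y x)) \<and>
     (\<forall>a b c. \<forall>x\<in>Lg a. \<forall>y\<in>Lg b. \<forall>z\<in>Lg c.
        sc (eps c a) (br (phi x) (br y z)) + sc (eps a b) (br (phi y) (br z x))
        + sc (eps b c) (br (phi z) (br x y)) = 0)"

definition regular_hlca where
  "regular_hlca sc Lg br phi eps \<longleftrightarrow> hom_lie_color_algebra sc Lg br phi eps \<and> bij phi"

definition graded_subspace ::
  "('k::field \<Rightarrow> 'v::ab_group_add \<Rightarrow> 'v) \<Rightarrow> ('g \<Rightarrow> 'v set) \<Rightarrow> 'v set \<Rightarrow> bool" where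
  "graded_subspace sc Lg A \<longleftrightarrow> module.subspace sc A \<and> A \<subseteq> module.span sc (\<Union>g. A \<inter> Lg g)"

definition subalgebra where
  "subalgebra sc Lg br phi A \<longleftrightarrow> graded_subspace sc Lg A \<and>
     (\<forall>x\<in>A. \<forall>y\<in>A. br x y \<in> A) \<and> phi ` A = A"

definition abelian_subalgebra where
  "abelian_subalgebra sc Lg br phi A \<longleftrightarrow> subalgebra sc Lg br phi A \<and>
     (\<forall>x\<in>A. \<forall>y\<in>A. br x y = 0)"

definition max_abelian_subalgebra where
  "max_abelian_subalgebra sc Lg br phi H \<longleftrightarrow> abelian_subalgebra sc Lg br phi H \<and>
     (\<forall>A. abelian_subalgebra sc Lg br phi A \<and> H \<subseteq> A \<longrightarrow> A = H)"

definition ideal where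
  "ideal sc Lg br phi I \<longleftrightarrow> graded_subspace sc Lg I \<and>
     (\<forall>x\<in>I. \<forall>y. br x y \<in> I) \<and> phi ` I = I"

definition annihilator where
  "annihilator br = {x. \<forall>y. br x y = 0}"

definition derived where
  "derived sc br = module.span sc {br x y | x y. True}"

definition H0 :: "('g::ab_group_add \<Rightarrow> 'v set) \<Rightarrow> 'v set \<Rightarrow> 'v set" where
  "H0 Lg H = H \<inter> Lg 0"

text \<open>Elements of the dual H_0^*: linear on H_0, represented canonically
  as functions on 'v vanishing outside H_0.\<close>
definition dual_H0 ::
  "('k::field \<Rightarrow> 'v::ab_group_add \<Rightarrow> 'v) \<Rightarrow> 'v set \<Rightarrow> ('v \<Rightarrow> 'k) set" where
  "dual_H0 sc S = {\<alpha>. (\<forall>x\<in>S. \<forall>y\<in>S. \<alpha> (x + y) = \<alpha> x + \<alpha> y) \<and>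
                      (\<forall>c. \<forall>x\<in>S. \<alpha> (sc c x) = c * \<alpha> x) \<and>
                      (\<forall>x. x \<notin> S \<longrightarrow> \<alpha> x = 0)}"

definition root_space where
  "root_space sc Lg br phi H \<alpha> = {v. \<forall>h\<in>H0 Lg H. br h v = sc (\<alpha> h) (phi v)}"

definition roots where
  "roots sc Lg br phi H = {\<alpha> \<in> dual_H0 sc (H0 Lg H). \<alpha> \<noteq> (\<lambda>_. 0) \<and>
      root_space sc Lg br phi H \<alpha> \<noteq> {0}}"

definition split_wrt where
  "split_wrt sc Lg br phi H \<longleftrightarrow>
     internal_direct_sum sc (insert None (Some ` roots sc Lg br phi H))
       (\<lambda>i. case i of None \<Rightarrow> H | Some \<alpha> \<Rightarrow> root_space sc Lg br phi H \<alpha>) UNIV"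

definition symmetric_roots where
  "symmetric_roots sc Lg br phi H \<longleftrightarrow>
     (\<forall>\<alpha>\<in>roots sc Lg br phi H. (\<lambda>x. - \<alpha> x) \<in> roots sc Lg br phi H)"

definition rpow :: "('v \<Rightarrow> 'v) \<Rightarrow> 'v set \<Rightarrow> ('v \<Rightarrow> 'k::field) \<Rightarrow> nat \<Rightarrow> ('v \<Rightarrow> 'k)" where
  "rpow phi S \<alpha> n = (\<lambda>x. if x \<in> S then \<alpha> ((inv_into S phi ^^ n) x) else 0)"

text \<open>For a list as = [\<alpha>_1,...,\<alpha>_k], the i-th partial expression
  \<alpha>_1\<phi>^{-i} + \<alpha>_2\<phi>^{-i} + \<alpha>_3\<phi>^{-i+1} + ... + \<alpha>_{i+1}\<phi>^{-1}.\<close>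
definition conn_sum :: "('v \<Rightarrow> 'v) \<Rightarrow> 'v set \<Rightarrow> ('v \<Rightarrow> 'k::field) list \<Rightarrow> nat \<Rightarrow> ('v \<Rightarrow> 'k)" where
  "conn_sum phi S as i = (\<lambda>x. rpow phi S (as ! 0) i x +
      (\<Sum>j\<in>{2..i+1}. rpow phi S (as ! (j - 1)) (i + 2 - j) x))"

definition connected where
  "connected sc Lg br phi H \<alpha> \<beta> \<longleftrightarrow>
    (let S = H0 Lg H; \<Lambda> = roots sc Lg br phi H;
         Fa = {rpow phi S \<alpha> n | n. True};
         Fb = {rpow phi S \<beta> m | m. True} \<union> {(\<lambda>x. - rpow phi S \<beta> m x) | m. True}
     in \<exists>as. length as \<ge> 1 \<and> set as \<subseteq> \<Lambda> \<and>
        (if length as = 1 then as ! 0 \<in> Fa \<inter> Fb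
         else as ! 0 \<in> Fa \<and>
              (\<forall>i\<in>{1..length as - 2}. conn_sum phi S as i \<in> \<Lambda>) \<and>
              conn_sum phi S as (length as - 1) \<in> Fb))"

definition root_class where
  "root_class sc Lg br phi H \<alpha> = {\<beta> \<in> roots sc Lg br phi H. connected sc Lg br phi H \<beta> \<alpha>}"

definition H_part where
  "H_part sc Lg br phi H C = module.span sc
     {br x y | x y \<beta>. \<beta> \<in> C \<and> x \<in> root_space sc Lg br phi H \<beta> \<and>
                     y \<in> root_space sc Lg br phi H (\<lambda>h. - \<beta> h)}"

definition V_part where
  "V_part sc Lg br phi H C = module.span sc (\<Union>\<beta>\<in>C. root_space sc Lg br phi H \<beta>)"

definition L_part where
  "L_part sc Lg br phi H C = {h + v | h v. h \<in> H_part sc Lg br phi H C \<and> v \<in> V_part sc Lg br phi H C}"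

end

theory Submission
  imports Defs
begin

text \<open>The roots split into connection classes \<open>C\<close>, which are closed under \<open>\<phi>\<close>-shifts, under
  negation and under \<open>(\<beta> + \<delta>)\<phi>\<^sup>-\<^sup>1\<close> whenever this is a root. Hence for \<open>\<beta>\<close>, \<open>\<delta>\<close> in different
  classes the root space of \<open>(\<beta> + \<delta>)\<phi>\<^sup>-\<^sup>1\<close>, which contains \<open>[L\<^sub>\<beta>, L\<^sub>\<delta>]\<close>, is zero, and
  Hom-Jacobi shows that \<open>H\<^sub>C = \<Sum>\<^sub>\<beta>\<^sub>\<in>\<^sub>C [L\<^sub>\<beta>, L\<^sub>-\<^sub>\<beta>]\<close> kills the root spaces outside \<open>C\<close> as well.
  So each \<open>I\<^sub>C = H\<^sub>C + V\<^sub>C\<close> is a \<open>\<phi>\<close>-stable ideal, and ideals of different classes commute.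
  As \<open>L = [L, L]\<close> is spanned by brackets of elements of \<open>H\<close> and of root spaces, the \<open>I\<^sub>C\<close> span
  \<open>L\<close>. The \<open>V\<^sub>C\<close> are independent by the root space decomposition, and an element of \<open>H\<^sub>C\<close> that
  is a sum of elements of the other \<open>H\<^sub>C\<close> commutes with all of \<open>L\<close>, so it vanishes as
  \<open>Z(L) = 0\<close>.\<close>

section \<open>Bicharacters and internal direct sums\<close>

lemma sum_if_mem_subset:
  "finite B \<Longrightarrow> F \<subseteq> B \<Longrightarrow> sum (\<lambda>i. if i \<in> F then a i else (0::'a::comm_monoid_add)) B = sum a F"
  using sum.inter_restrict[of B a F, symmetric] by (simp add: Int_absorb1)

lemma bicharacter_zero_left:
  assumes "bicharacter eps" shows "eps 0 c = 1"
proof -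
  have "eps 0 c * eps 0 c = eps 0 c * 1"
    using assms unfolding bicharacter_def by (metis add_0 mult_1_right)
  then show ?thesis using assms unfolding bicharacter_def by (metis mult_left_cancel)
qed

lemma bicharacter_zero_right:
  assumes "bicharacter eps" shows "eps c 0 = 1"
proof -
  have "eps c 0 * eps c 0 = eps c 0 * 1"
    using assms unfolding bicharacter_def by (metis add_0 mult_1_right)
  then show ?thesis using assms unfolding bicharacter_def by (metis mult_left_cancel)
qed

context vector_space
begin

lemma subspace_finite_sums:
  assumes sub: "\<forall>i\<in>A. subspace (V i)"
  shows "subspace {x. \<exists>F a. finite F \<and> F \<subseteq> A \<and> (\<forall>i\<in>F. a i \<in> V i) \<and> x = sum a F}"
    (is "subspace ?S")
  unfolding subspace_def
proof (intro conjI allI impI ballI)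
  show "0 \<in> ?S" by (auto intro!: exI[of _ "{}"])
next
  fix x y assume "x \<in> ?S" "y \<in> ?S"
  then obtain F a G b where F: "finite F" "F \<subseteq> A" "\<forall>i\<in>F. a i \<in> V i" "x = sum a F"
    and G: "finite G" "G \<subseteq> A" "\<forall>i\<in>G. b i \<in> V i" "y = sum b G" by auto
  define c where "c i = (if i \<in> F then a i else 0) + (if i \<in> G then b i else 0)" for i
  have "sum c (F \<union> G) = sum (\<lambda>i. if i \<in> F then a i else 0) (F \<union> G)
      + sum (\<lambda>i. if i \<in> G then b i else 0) (F \<union> G)"
    unfolding c_def by (simp add: sum.distrib)
  also have "\<dots> = x + y"
    using F(1,4) G(1,4) by (simp add: sum_if_mem_subset)
  finally have "sum c (F \<union> G) = x + y" .
  moreover have "c i \<in> V i" if i: "i \<in> F \<union> G" for i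
  proof -
    have si: "subspace (V i)" using i sub F(2) G(2) by auto
    have "(if i \<in> F then a i else 0) \<in> V i" "(if i \<in> G then b i else 0) \<in> V i"
      using F(3) G(3) si subspace_0 by auto
    then show ?thesis unfolding c_def using si subspace_add by blast
  qed
  ultimately show "x + y \<in> ?S"
    using F(1,2) G(1,2) by (intro CollectI exI[of _ "F \<union> G"] exI[of _ c]) auto
next
  fix k x assume "x \<in> ?S"
  then obtain F a where F: "finite F" "F \<subseteq> A" "\<forall>i\<in>F. a i \<in> V i" "x = sum a F" by auto
  then have "\<forall>i\<in>F. k *s a i \<in> V i" using sub subspace_scale by blast
  then show "k *s x \<in> ?S"
    using F by (auto intro!: exI[of _ F] exI[of _ "\<lambda>i. k *s a i"] simp: scale_sum_right)
qed

lemma span_UN_subspaces_iff: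
  assumes sub: "\<forall>i\<in>A. subspace (V i)"
  shows "x \<in> span (\<Union>i\<in>A. V i) \<longleftrightarrow>
    (\<exists>F a. finite F \<and> F \<subseteq> A \<and> (\<forall>i\<in>F. a i \<in> V i) \<and> x = sum a F)"
proof
  assume x: "x \<in> span (\<Union>i\<in>A. V i)"
  have "span (\<Union>i\<in>A. V i) \<subseteq> {x. \<exists>F a. finite F \<and> F \<subseteq> A \<and> (\<forall>i\<in>F. a i \<in> V i) \<and> x = sum a F}"
    (is "_ \<subseteq> ?S")
  proof (rule span_minimal[OF _ subspace_finite_sums[OF sub]])
    show "(\<Union>i\<in>A. V i) \<subseteq> ?S"
    proof
      fix y assume "y \<in> (\<Union>i\<in>A. V i)"
      then obtain i where "i \<in> A" "y \<in> V i" by blast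
      then show "y \<in> ?S" by (intro CollectI exI[of _ "{i}"] exI[of _ "\<lambda>_. y"]) simp
    qed
  qed
  then show "\<exists>F a. finite F \<and> F \<subseteq> A \<and> (\<forall>i\<in>F. a i \<in> V i) \<and> x = sum a F"
    using x by blast
next
  assume "\<exists>F a. finite F \<and> F \<subseteq> A \<and> (\<forall>i\<in>F. a i \<in> V i) \<and> x = sum a F"
  then obtain F a where F: "finite F" "F \<subseteq> A" "\<forall>i\<in>F. a i \<in> V i" "x = sum a F" by auto
  show "x \<in> span (\<Union>i\<in>A. V i)" unfolding F(4)
    by (rule span_sum) (use F in \<open>auto intro: span_base\<close>)
qed

lemma internal_direct_sum_subspace:
  "internal_direct_sum scale J V W \<Longrightarrow> i \<in> J \<Longrightarrow> subspace (V i)"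
  unfolding internal_direct_sum_def by blast

lemma internal_direct_sum_independent:
  "internal_direct_sum scale J V W \<Longrightarrow> finite F \<Longrightarrow> F \<subseteq> J \<Longrightarrow> \<forall>j\<in>F. v j \<in> V j \<Longrightarrow>
    sum v F = 0 \<Longrightarrow> i \<in> F \<Longrightarrow> v i = 0"
  unfolding internal_direct_sum_def by blast

lemma internal_direct_sum_span:
  "internal_direct_sum scale J V W \<Longrightarrow> W = span (\<Union>i\<in>J. V i)"
  unfolding internal_direct_sum_def by blast

lemma internal_direct_sum_span_disjoint:
  assumes ds: "internal_direct_sum scale J V W"
    and AB: "A \<subseteq> J" "B \<subseteq> J" "A \<inter> B = {}"
    and x: "x \<in> span (\<Union>i\<in>A. V i)" "x \<in> span (\<Union>i\<in>B. V i)"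
  shows "x = 0"
proof -
  note sub = internal_direct_sum_subspace[OF ds] and ind = internal_direct_sum_independent[OF ds]
  have subA: "\<forall>i\<in>A. subspace (V i)" and subB: "\<forall>i\<in>B. subspace (V i)" using sub AB by auto
  from x(1)[unfolded span_UN_subspaces_iff[OF subA]]
  obtain F a where F: "finite F" "F \<subseteq> A" "\<forall>i\<in>F. a i \<in> V i" "x = sum a F"
    by blast
  from x(2)[unfolded span_UN_subspaces_iff[OF subB]]
  obtain G b where G: "finite G" "G \<subseteq> B" "\<forall>i\<in>G. b i \<in> V i" "x = sum b G"
    by blast
  define c where "c i = (if i \<in> F then a i else 0) - (if i \<in> G then b i else 0)" for i
  have "sum c (F \<union> G) = sum (\<lambda>i. if i \<in> F then a i else 0) (F \<union> G)
      - sum (\<lambda>i. if i \<in> G then b i else 0) (F \<union> G)"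
    unfolding c_def by (simp add: sum_subtractf)
  also have "\<dots> = sum a F - sum b G"
    using F(1) G(1) by (simp add: sum_if_mem_subset)
  finally have s0: "sum c (F \<union> G) = 0" using F G by simp
  have FG: "F \<inter> G = {}" using F G AB by auto
  have "\<forall>i\<in>F \<union> G. c i \<in> V i"
  proof
    fix i assume i: "i \<in> F \<union> G"
    then have si: "subspace (V i)" using sub F G AB by auto
    have "(if i \<in> F then a i else 0) \<in> V i" "(if i \<in> G then b i else 0) \<in> V i"
      using F G si subspace_0 by auto
    then show "c i \<in> V i" unfolding c_def using si subspace_diff by blast
  qed
  moreover have "finite (F \<union> G)" "F \<union> G \<subseteq> J" using F G AB by auto
  ultimately have "\<forall>i\<in>F \<union> G. c i = 0" using s0 ind by blast
  then have "\<forall>i\<in>F. a i = 0"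
    using FG unfolding c_def by (metis (full_types) Un_iff disjoint_iff diff_0_right)
  then show ?thesis using F by simp
qed

lemma internal_direct_sum_component:
  assumes ds: "internal_direct_sum scale J V W"
    and F: "finite F" "F \<subseteq> J" "\<forall>i\<in>F. a i \<in> V i" and j: "j \<in> J" "sum a F \<in> V j"
  shows "\<forall>i\<in>F - {j}. a i = 0"
proof -
  note sub = internal_direct_sum_subspace[OF ds] and ind = internal_direct_sum_independent[OF ds]
  define c where "c i = (if i \<in> F then a i else 0) - (if i = j then sum a F else 0)" for i
  have "sum c (insert j F) = sum (\<lambda>i. if i \<in> F then a i else 0) (insert j F)
      - sum (\<lambda>i. if i = j then sum a F else 0) (insert j F)"
    unfolding c_def by (simp add: sum_subtractf)
  also have "\<dots> = sum a F - sum a F"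
    using sum_if_mem_subset[of "insert j F" F a, OF _ subset_insertI] F(1) by (simp add: sum.delta)
  finally have s0: "sum c (insert j F) = 0" by simp
  have "\<forall>i\<in>insert j F. c i \<in> V i"
  proof
    fix i assume i: "i \<in> insert j F"
    then have si: "subspace (V i)" using sub F j by auto
    have "(if i \<in> F then a i else 0) \<in> V i" "(if i = j then sum a F else 0) \<in> V i"
      using F j si subspace_0 by auto
    then show "c i \<in> V i" unfolding c_def using si subspace_diff by blast
  qed
  moreover have "finite (insert j F)" "insert j F \<subseteq> J" using F j by auto
  ultimately have "\<forall>i\<in>insert j F. c i = 0" using s0 ind by blast
  then show ?thesis unfolding c_def by auto
qed

lemma linear_image_span_subspace:
  assumes f: "Vector_Spaces.linear scale scale f" and Z: "subspace Z"
    and gen: "\<And>x. x \<in> X \<Longrightarrow> f x \<in> Z" and x: "x \<in> span X"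
  shows "f x \<in> Z"
proof -
  have add: "f (x + y) = f x + f y" and sca: "f (c *s x) = c *s f x" for x y c
    using f unfolding Vector_Spaces.linear_iff by blast+
  have "f 0 = 0" using add[of 0 0] by simp
  then have "subspace {x. f x \<in> Z}" using Z add sca unfolding subspace_def by auto
  then have "span X \<subseteq> {x. f x \<in> Z}" using gen by (intro span_minimal) auto
  then show ?thesis using x by blast
qed

lemma bilinear_span_subspace:
  assumes f: "\<And>x. Vector_Spaces.linear scale scale (f x)"
      "\<And>y. Vector_Spaces.linear scale scale (\<lambda>x. f x y)"
    and Z: "subspace Z" and gen: "\<And>x y. x \<in> X \<Longrightarrow> y \<in> Y \<Longrightarrow> f x y \<in> Z"
    and x: "x \<in> span X" and y: "y \<in> span Y"
  shows "f x y \<in> Z"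
proof -
  have "f x y' \<in> Z" if "y' \<in> Y" for y'
    using linear_image_span_subspace[OF f(2) Z _ x] gen that by blast
  then show ?thesis using linear_image_span_subspace[OF f(1) Z _ y] by blast
qed

end

section \<open>Regular Hom-Lie color algebras\<close>

locale regular_hom_lie_color_algebra = vector_space sc
  for sc :: "'k::field \<Rightarrow> 'v::ab_group_add \<Rightarrow> 'v" +
  fixes Lg :: "'g::ab_group_add \<Rightarrow> 'v set" and br :: "'v \<Rightarrow> 'v \<Rightarrow> 'v"
    and phi :: "'v \<Rightarrow> 'v" and eps :: "'g \<Rightarrow> 'g \<Rightarrow> 'k"
  assumes regular: "regular_hlca sc Lg br phi eps"
begin

lemma hlca: "hom_lie_color_algebra sc Lg br phi eps"
  using regular unfolding regular_hlca_def by blast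

lemma bij_phi: "bij phi"
  using regular unfolding regular_hlca_def by blast

lemma grading: "internal_direct_sum sc UNIV Lg UNIV"
  using hlca unfolding hom_lie_color_algebra_def by blast

lemma grading_subspaces: "\<forall>g\<in>UNIV. subspace (Lg g)"
  using grading unfolding internal_direct_sum_def by blast

lemma grading_subspace: "subspace (Lg g)"
  using grading_subspaces by simp

lemma grading_spans: "span (\<Union>g. Lg g) = UNIV"
  using grading unfolding internal_direct_sum_def by simp

lemma eps_nonzero: "eps a b \<noteq> 0"
  and eps_mult_swap: "eps a b * eps b a = 1"
  using hlca unfolding hom_lie_color_algebra_def bicharacter_def by auto

lemma eps_zero_left: "eps 0 b = 1"
  and eps_zero_right: "eps a 0 = 1"
  using hlca bicharacter_zero_left bicharacter_zero_right
  unfolding hom_lie_color_algebra_def by auto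

lemma bracket_linear_right: "Vector_Spaces.linear sc sc (br x)"
  and bracket_linear_left: "Vector_Spaces.linear sc sc (\<lambda>x. br x y)"
  and phi_linear: "Vector_Spaces.linear sc sc phi"
  using hlca unfolding hom_lie_color_algebra_def by auto

lemma bracket_span_subspace:
  "subspace Z \<Longrightarrow> (\<And>x y. x \<in> X \<Longrightarrow> y \<in> Y \<Longrightarrow> br x y \<in> Z) \<Longrightarrow>
    x \<in> span X \<Longrightarrow> y \<in> span Y \<Longrightarrow> br x y \<in> Z"
  by (rule bilinear_span_subspace[OF bracket_linear_right bracket_linear_left])

lemma bracket_add_right: "br x (y + z) = br x y + br x z"
  and bracket_scale_right: "br x (sc c y) = sc c (br x y)"
  using bracket_linear_right[of x] unfolding Vector_Spaces.linear_iff by auto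

lemma bracket_add_left: "br (x + y) z = br x z + br y z"
  and bracket_scale_left: "br (sc c x) z = sc c (br x z)"
  using bracket_linear_left[of z] unfolding Vector_Spaces.linear_iff by auto

lemma phi_add: "phi (x + y) = phi x + phi y"
  and phi_scale: "phi (sc c x) = sc c (phi x)"
  using phi_linear unfolding Vector_Spaces.linear_iff by auto

lemma phi_grading: "x \<in> Lg g \<Longrightarrow> phi x \<in> Lg g"
proof -
  have "\<forall>g. phi ` Lg g \<subseteq> Lg g"
    using hlca unfolding hom_lie_color_algebra_def by (elim conjE) assumption
  then show "x \<in> Lg g \<Longrightarrow> phi x \<in> Lg g" by blast
qed

lemma phi_bracket: "phi (br x y) = br (phi x) (phi y)"
proof -
  have "\<forall>x y. phi (br x y) = br (phi x) (phi y)"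
    using hlca unfolding hom_lie_color_algebra_def by (elim conjE) assumption
  then show ?thesis by blast
qed

lemma bracket_grading: "x \<in> Lg a \<Longrightarrow> y \<in> Lg b \<Longrightarrow> br x y \<in> Lg (a + b)"
proof -
  have "\<forall>g h. \<forall>x\<in>Lg g. \<forall>y\<in>Lg h. br x y \<in> Lg (g + h)"
    using hlca unfolding hom_lie_color_algebra_def by (elim conjE) assumption
  then show "x \<in> Lg a \<Longrightarrow> y \<in> Lg b \<Longrightarrow> br x y \<in> Lg (a + b)" by blast
qed

lemma bracket_skew: "x \<in> Lg a \<Longrightarrow> y \<in> Lg b \<Longrightarrow> br x y = - sc (eps a b) (br y x)"
proof -
  have "\<forall>a b. \<forall>x\<in>Lg a. \<forall>y\<in>Lg b. br x y = - sc (eps a b) (br y x)"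
    using hlca unfolding hom_lie_color_algebra_def by (elim conjE) assumption
  then show "x \<in> Lg a \<Longrightarrow> y \<in> Lg b \<Longrightarrow> br x y = - sc (eps a b) (br y x)" by blast
qed

lemma hom_jacobi:
  assumes "x \<in> Lg a" "y \<in> Lg b" "z \<in> Lg c"
  shows "sc (eps c a) (br (phi x) (br y z)) + sc (eps a b) (br (phi y) (br z x))
    + sc (eps b c) (br (phi z) (br x y)) = 0"
proof -
  have "\<forall>a b c. \<forall>x\<in>Lg a. \<forall>y\<in>Lg b. \<forall>z\<in>Lg c.
      sc (eps c a) (br (phi x) (br y z)) + sc (eps a b) (br (phi y) (br z x))
      + sc (eps b c) (br (phi z) (br x y)) = 0"
    using hlca unfolding hom_lie_color_algebra_def by (elim conjE) assumption
  then show ?thesis using assms by blast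
qed

lemma bracket_bracket_linear:
  "Vector_Spaces.linear sc sc (\<lambda>y. br (br x y) z)" "Vector_Spaces.linear sc sc (\<lambda>x. br (br x y) z)"
  using phi_linear unfolding Vector_Spaces.linear_iff
  by (simp_all add: bracket_add_left bracket_add_right bracket_scale_left bracket_scale_right)

lemma bracket_zero_left [simp]: "br 0 y = 0"
  using bracket_add_left[of 0 0 y] by simp

lemma bracket_zero_right [simp]: "br x 0 = 0"
  using bracket_add_right[of x 0 0] by simp

lemma phi_zero [simp]: "phi 0 = 0"
  using phi_add[of 0 0] by simp

lemma bracket_uminus_left: "br (- x) y = - br x y"
  using bracket_add_left[of "- x" x y] by (simp add: eq_neg_iff_add_eq_0)

lemma bracket_uminus_right: "br x (- y) = - br x y"
  using bracket_add_right[of x "- y" y] by (simp add: eq_neg_iff_add_eq_0)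

lemma bracket_sum_left: "br (sum f A) y = (\<Sum>i\<in>A. br (f i) y)"
  by (induct A rule: infinite_finite_induct) (auto simp: bracket_add_left)

lemma bracket_sum_right: "br y (sum f A) = (\<Sum>i\<in>A. br y (f i))"
  by (induct A rule: infinite_finite_induct) (auto simp: bracket_add_right)

lemma phi_sum: "phi (sum f A) = (\<Sum>i\<in>A. phi (f i))"
  by (induct A rule: infinite_finite_induct) (auto simp: phi_add)

lemma phi_inj: "phi x = phi y \<Longrightarrow> x = y"
  using bij_phi unfolding bij_def inj_def by blast

lemma phi_eq_0_iff: "phi x = 0 \<longleftrightarrow> x = 0"
  using phi_inj[of x 0] by auto

abbreviation phi_inv :: "'v \<Rightarrow> 'v" where "phi_inv \<equiv> inv phi"

lemma phi_phi_inv [simp]: "phi (phi_inv x) = x"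
  using bij_phi by (simp add: bij_is_surj surj_f_inv_f)

lemma phi_inv_phi [simp]: "phi_inv (phi x) = x"
  using bij_phi by (simp add: bij_is_inj)

lemma phi_inv_add: "phi_inv (x + y) = phi_inv x + phi_inv y"
  by (rule phi_inj) (simp add: phi_add)

lemma phi_inv_scale: "phi_inv (sc c x) = sc c (phi_inv x)"
  by (rule phi_inj) (simp add: phi_scale)

lemma phi_inv_linear: "Vector_Spaces.linear sc sc phi_inv"
  using phi_linear phi_inv_add phi_inv_scale unfolding Vector_Spaces.linear_iff by blast

lemma phi_inv_zero [simp]: "phi_inv 0 = 0"
  by (rule phi_inj) simp

lemma phi_inv_sum: "phi_inv (sum f A) = (\<Sum>i\<in>A. phi_inv (f i))"
  by (induct A rule: infinite_finite_induct) (auto simp: phi_inv_add)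

lemma phi_inv_bracket: "phi_inv (br x y) = br (phi_inv x) (phi_inv y)"
  by (rule phi_inj) (simp add: phi_bracket)

text \<open>\<open>\<phi>\<close> keeps each homogeneous component of \<open>\<phi>\<^sup>-\<^sup>1 w\<close> in its degree, so by independence
  only the component of the degree of \<open>w\<close> survives.\<close>
lemma phi_inv_grading:
  assumes w: "w \<in> Lg g" shows "phi_inv w \<in> Lg g"
proof -
  have "phi_inv w \<in> span (\<Union>g. Lg g)" using grading_spans by simp
  from this[unfolded span_UN_subspaces_iff[OF grading_subspaces]]
  obtain F a where F: "finite F" "\<forall>i\<in>F. a i \<in> Lg i" "phi_inv w = sum a F" by blast
  have "sum (\<lambda>i. phi (a i)) F \<in> Lg g" using F(3) w by (metis phi_phi_inv phi_sum)
  then have "\<forall>i\<in>F - {g}. phi (a i) = 0"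
    using internal_direct_sum_component[OF grading, of F "\<lambda>i. phi (a i)" g] F phi_grading by blast
  then have "\<forall>i\<in>F. a i \<in> Lg g"
    using F(2) phi_eq_0_iff subspace_0[OF grading_subspace] by (metis Diff_iff singletonD)
  then show ?thesis using F(3) subspace_sum[OF grading_subspace] by metis
qed

end

section \<open>Roots and root spaces\<close>

locale split_regular_hom_lie_color_algebra = regular_hom_lie_color_algebra sc Lg br phi eps
  for sc :: "'k::field \<Rightarrow> 'v::ab_group_add \<Rightarrow> 'v" and Lg br phi eps +
  fixes H :: "'v set"
  assumes max_abelian: "max_abelian_subalgebra sc Lg br phi H"
    and split: "split_wrt sc Lg br phi H"
    and symmetric: "symmetric_roots sc Lg br phi H"
begin

abbreviation "H\<^sub>0 \<equiv> H0 Lg H"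
abbreviation "root_sp \<equiv> root_space sc Lg br phi H"
abbreviation "\<Lambda> \<equiv> roots sc Lg br phi H"
abbreviation "dual \<equiv> dual_H0 sc H\<^sub>0"
abbreviation "shift \<equiv> rpow phi H\<^sub>0"

lemma H_subspace: "subspace H"
  and H_abelian: "x \<in> H \<Longrightarrow> y \<in> H \<Longrightarrow> br x y = 0"
  and phi_image_H: "phi ` H = H"
  using max_abelian
  unfolding max_abelian_subalgebra_def abelian_subalgebra_def subalgebra_def graded_subspace_def
  by blast+

lemma phi_H: "x \<in> H \<Longrightarrow> phi x \<in> H"
  using phi_image_H by blast

lemma phi_inv_H: "x \<in> H \<Longrightarrow> phi_inv x \<in> H"
  using phi_image_H by (metis imageE phi_inv_phi)

lemma H0_subspace: "subspace H\<^sub>0"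
  unfolding H0_def by (rule subspace_inter[OF H_subspace grading_subspace])

lemma phi_H0: "x \<in> H\<^sub>0 \<Longrightarrow> phi x \<in> H\<^sub>0"
  unfolding H0_def using phi_H phi_grading by blast

lemma phi_inv_H0: "x \<in> H\<^sub>0 \<Longrightarrow> phi_inv x \<in> H\<^sub>0"
  unfolding H0_def using phi_inv_H phi_inv_grading by blast

lemma H0_H: "x \<in> H\<^sub>0 \<Longrightarrow> x \<in> H"
  unfolding H0_def by blast

lemma H0_L0: "x \<in> H\<^sub>0 \<Longrightarrow> x \<in> Lg 0"
  unfolding H0_def by blast

lemma phi_inv_pow_H0: "x \<in> H\<^sub>0 \<Longrightarrow> (phi_inv ^^ n) x \<in> H\<^sub>0"
  by (induct n) (auto simp: phi_inv_H0)

lemma phi_inv_pow_add: "(phi_inv ^^ n) (x + y) = (phi_inv ^^ n) x + (phi_inv ^^ n) y"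
  by (induct n) (auto simp: phi_inv_add)

lemma phi_inv_pow_scale: "(phi_inv ^^ n) (sc c x) = sc c ((phi_inv ^^ n) x)"
  by (induct n) (auto simp: phi_inv_scale)

lemma inv_into_H0: "y \<in> H\<^sub>0 \<Longrightarrow> inv_into H\<^sub>0 phi y = phi_inv y"
proof -
  assume y: "y \<in> H\<^sub>0"
  have "inj_on phi H\<^sub>0" using bij_phi by (metis bij_betw_def inj_on_subset subset_UNIV)
  then show ?thesis using inv_into_f_eq[of phi H\<^sub>0 "phi_inv y" y] phi_inv_H0[OF y] by simp
qed

lemma inv_into_pow_H0: "x \<in> H\<^sub>0 \<Longrightarrow> (inv_into H\<^sub>0 phi ^^ n) x = (phi_inv ^^ n) x"
proof (induct n)
  case 0 then show ?case by simp
next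
  case (Suc n)
  then show ?case using inv_into_H0[OF phi_inv_pow_H0[OF Suc(2), of n]] by simp
qed

lemma shift_eq: "shift \<alpha> n = (\<lambda>x. if x \<in> H\<^sub>0 then \<alpha> ((phi_inv ^^ n) x) else 0)"
  unfolding rpow_def by (rule ext) (simp add: inv_into_pow_H0)

lemma shift_shift: "shift (shift \<alpha> n) m = shift \<alpha> (n + m)"
  unfolding shift_eq by (rule ext) (simp add: phi_inv_pow_H0 funpow_add)

lemma dual_outside: "\<alpha> \<in> dual \<Longrightarrow> x \<notin> H\<^sub>0 \<Longrightarrow> \<alpha> x = 0"
  unfolding dual_H0_def by blast

lemma dual_add: "\<alpha> \<in> dual \<Longrightarrow> x \<in> H\<^sub>0 \<Longrightarrow> y \<in> H\<^sub>0 \<Longrightarrow> \<alpha> (x + y) = \<alpha> x + \<alpha> y"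
  unfolding dual_H0_def by blast

lemma dual_scale: "\<alpha> \<in> dual \<Longrightarrow> x \<in> H\<^sub>0 \<Longrightarrow> \<alpha> (sc c x) = c * \<alpha> x"
  unfolding dual_H0_def by blast

lemma dualI: "(\<And>x y. x \<in> H\<^sub>0 \<Longrightarrow> y \<in> H\<^sub>0 \<Longrightarrow> \<alpha> (x + y) = \<alpha> x + \<alpha> y) \<Longrightarrow>
   (\<And>c x. x \<in> H\<^sub>0 \<Longrightarrow> \<alpha> (sc c x) = c * \<alpha> x) \<Longrightarrow> (\<And>x. x \<notin> H\<^sub>0 \<Longrightarrow> \<alpha> x = 0) \<Longrightarrow> \<alpha> \<in> dual"
  unfolding dual_H0_def by blast

lemma shift_0: "\<alpha> \<in> dual \<Longrightarrow> shift \<alpha> 0 = \<alpha>"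
  unfolding shift_eq by (rule ext) (simp add: dual_outside)

lemma shift_plus: "shift (\<lambda>x. \<alpha> x + \<beta> x) n = (\<lambda>x. shift \<alpha> n x + shift \<beta> n x)"
  unfolding shift_eq by (rule ext) simp

lemma shift_uminus: "shift (\<lambda>x. - \<alpha> x) n = (\<lambda>x. - shift \<alpha> n x)"
  unfolding shift_eq by (rule ext) simp

lemma H0_add: "x \<in> H\<^sub>0 \<Longrightarrow> y \<in> H\<^sub>0 \<Longrightarrow> x + y \<in> H\<^sub>0"
  using H0_subspace subspace_add by blast

lemma H0_scale: "x \<in> H\<^sub>0 \<Longrightarrow> sc c x \<in> H\<^sub>0"
  using H0_subspace subspace_scale by blast

lemma shift_dual: "\<alpha> \<in> dual \<Longrightarrow> shift \<alpha> n \<in> dual"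
  unfolding shift_eq
  by (rule dualI)
    (auto simp: phi_inv_pow_add phi_inv_pow_scale phi_inv_pow_H0 H0_add H0_scale dual_add dual_scale)

lemma dual_plus: "\<alpha> \<in> dual \<Longrightarrow> \<beta> \<in> dual \<Longrightarrow> (\<lambda>x. \<alpha> x + \<beta> x) \<in> dual"
  by (rule dualI) (auto simp: dual_add dual_scale dual_outside distrib_left)

definition unshift :: "('v \<Rightarrow> 'k) \<Rightarrow> 'v \<Rightarrow> 'k" where
  "unshift \<alpha> = (\<lambda>x. if x \<in> H\<^sub>0 then \<alpha> (phi x) else 0)"

lemma unshift_dual: "\<alpha> \<in> dual \<Longrightarrow> unshift \<alpha> \<in> dual"
  unfolding unshift_def
  by (rule dualI) (auto simp: phi_add phi_scale phi_H0 H0_add H0_scale dual_add dual_scale)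

lemma shift_unshift: "\<alpha> \<in> dual \<Longrightarrow> shift (unshift \<alpha>) 1 = \<alpha>"
  unfolding shift_eq unshift_def by (rule ext) (auto simp: phi_inv_H0 dual_outside)

lemma shift_Suc: "shift \<alpha> (Suc n) = shift (shift \<alpha> n) 1"
  using shift_shift[of \<alpha> n 1] by simp

lemma root_space_subspace: "subspace (root_sp \<alpha>)"
  unfolding subspace_def root_space_def
  by (auto simp: bracket_add_right bracket_scale_right phi_add phi_scale
      scale_right_distrib scale_left_commute)

lemma root_spaceD: "v \<in> root_sp \<alpha> \<Longrightarrow> h \<in> H\<^sub>0 \<Longrightarrow> br h v = sc (\<alpha> h) (phi v)"
  unfolding root_space_def by blast

lemma root_spaceI: "(\<And>h. h \<in> H\<^sub>0 \<Longrightarrow> br h v = sc (\<alpha> h) (phi v)) \<Longrightarrow> v \<in> root_sp \<alpha>"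
  unfolding root_space_def by blast

lemma phi_root_space: "v \<in> root_sp \<alpha> \<Longrightarrow> phi v \<in> root_sp (shift \<alpha> 1)"
proof (rule root_spaceI)
  fix h assume v: "v \<in> root_sp \<alpha>" and h: "h \<in> H\<^sub>0"
  have "br h (phi v) = phi (br (phi_inv h) v)" by (simp add: phi_bracket)
  also have "\<dots> = phi (sc (\<alpha> (phi_inv h)) (phi v))" using root_spaceD[OF v phi_inv_H0[OF h]] by simp
  also have "\<dots> = sc (shift \<alpha> 1 h) (phi (phi v))" using h by (simp add: phi_scale shift_eq)
  finally show "br h (phi v) = sc (shift \<alpha> 1 h) (phi (phi v))" .
qed

lemma phi_inv_root_space: "v \<in> root_sp \<alpha> \<Longrightarrow> phi_inv v \<in> root_sp (unshift \<alpha>)"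
proof (rule root_spaceI)
  fix h assume v: "v \<in> root_sp \<alpha>" and h: "h \<in> H\<^sub>0"
  have "phi (br h (phi_inv v)) = br (phi h) v" by (simp add: phi_bracket)
  also have "\<dots> = sc (\<alpha> (phi h)) (phi v)" using root_spaceD[OF v phi_H0[OF h]] by simp
  also have "\<dots> = phi (sc (unshift \<alpha> h) (phi (phi_inv v)))" using h
    by (simp add: phi_scale unshift_def)
  finally show "br h (phi_inv v) = sc (unshift \<alpha> h) (phi (phi_inv v))" by (rule phi_inj)
qed

lemma roots_dual: "\<alpha> \<in> \<Lambda> \<Longrightarrow> \<alpha> \<in> dual"
  unfolding roots_def by blast

lemma roots_nonzero: "\<alpha> \<in> \<Lambda> \<Longrightarrow> \<exists>x\<in>H\<^sub>0. \<alpha> x \<noteq> 0"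
proof -
  assume a: "\<alpha> \<in> \<Lambda>"
  then have "\<alpha> \<noteq> (\<lambda>_. 0)" unfolding roots_def by blast
  then obtain x where "\<alpha> x \<noteq> 0" by auto
  then show ?thesis using dual_outside[OF roots_dual[OF a]] by blast
qed

lemma roots_root_space_nonzero: "\<alpha> \<in> \<Lambda> \<Longrightarrow> \<exists>v\<in>root_sp \<alpha>. v \<noteq> 0"
proof -
  assume a: "\<alpha> \<in> \<Lambda>"
  then have "root_sp \<alpha> \<noteq> {0}" unfolding roots_def by blast
  moreover have "0 \<in> root_sp \<alpha>" using root_space_subspace subspace_0 by blast
  ultimately show ?thesis by blast
qed

lemma rootsI: "\<alpha> \<in> dual \<Longrightarrow> x \<in> H\<^sub>0 \<Longrightarrow> \<alpha> x \<noteq> 0 \<Longrightarrow> v \<in> root_sp \<alpha> \<Longrightarrow> v \<noteq> 0 \<Longrightarrow> \<alpha> \<in> \<Lambda>"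
  unfolding roots_def by auto

lemma shift1_roots: "\<alpha> \<in> \<Lambda> \<Longrightarrow> shift \<alpha> 1 \<in> \<Lambda>"
proof -
  assume a: "\<alpha> \<in> \<Lambda>"
  obtain x where x: "x \<in> H\<^sub>0" "\<alpha> x \<noteq> 0" using roots_nonzero[OF a] by blast
  obtain v where v: "v \<in> root_sp \<alpha>" "v \<noteq> 0" using roots_root_space_nonzero[OF a] by blast
  have "shift \<alpha> 1 (phi x) = \<alpha> x" using x phi_H0 by (simp add: shift_eq)
  then show ?thesis
    using rootsI[OF shift_dual[OF roots_dual[OF a]] phi_H0[OF x(1)] _ phi_root_space[OF v(1)]]
      x v phi_eq_0_iff by auto
qed

lemma shift_roots: "\<alpha> \<in> \<Lambda> \<Longrightarrow> shift \<alpha> n \<in> \<Lambda>"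
proof (induct n)
  case 0 then show ?case using shift_0 roots_dual by simp
next
  case (Suc n) then have "shift \<alpha> n \<in> \<Lambda>" by blast
  then show ?case by (subst shift_Suc) (rule shift1_roots)
qed

lemma unshift_roots: "\<alpha> \<in> \<Lambda> \<Longrightarrow> unshift \<alpha> \<in> \<Lambda>"
proof -
  assume a: "\<alpha> \<in> \<Lambda>"
  obtain x where x: "x \<in> H\<^sub>0" "\<alpha> x \<noteq> 0" using roots_nonzero[OF a] by blast
  obtain v where v: "v \<in> root_sp \<alpha>" "v \<noteq> 0" using roots_root_space_nonzero[OF a] by blast
  have "unshift \<alpha> (phi_inv x) = \<alpha> x" using x phi_inv_H0 by (simp add: unshift_def)
  moreover have "phi_inv v \<noteq> 0" using v by (metis phi_phi_inv phi_zero)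
  ultimately show ?thesis
    using rootsI[OF unshift_dual[OF roots_dual[OF a]] phi_inv_H0[OF x(1)] _ phi_inv_root_space[OF v(1)]] x
    by auto
qed

lemma uminus_roots: "\<alpha> \<in> \<Lambda> \<Longrightarrow> (\<lambda>x. - \<alpha> x) \<in> \<Lambda>"
  using symmetric unfolding symmetric_roots_def by blast

abbreviation "split_index \<equiv> insert None (Some ` \<Lambda>)"
abbreviation "split_summand \<equiv> \<lambda>i. case i of None \<Rightarrow> H | Some \<alpha> \<Rightarrow> root_sp \<alpha>"

lemma split_direct_sum: "internal_direct_sum sc split_index split_summand UNIV"
  using split unfolding split_wrt_def .

lemma split_spans: "span (H \<union> (\<Union>\<alpha>\<in>\<Lambda>. root_sp \<alpha>)) = UNIV"
proof -
  have "(\<Union>i\<in>split_index. split_summand i) = H \<union> (\<Union>\<alpha>\<in>\<Lambda>. root_sp \<alpha>)" by auto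
  then show ?thesis using internal_direct_sum_span[OF split_direct_sum] by simp
qed

lemma root_space_zero_H:
  assumes v: "v \<in> root_sp (\<lambda>_. 0)" shows "v \<in> H"
proof -
  have sub: "\<forall>i\<in>split_index. subspace (split_summand i)"
    using internal_direct_sum_subspace[OF split_direct_sum] by blast
  have "v \<in> span (\<Union>i\<in>split_index. split_summand i)"
    using internal_direct_sum_span[OF split_direct_sum] by blast
  from this[unfolded span_UN_subspaces_iff[OF sub]]
  obtain F a where F: "finite F" "F \<subseteq> split_index" "\<forall>i\<in>F. a i \<in> split_summand i" "v = sum a F"
    by blast
  have root_parts: "a (Some \<alpha>) = 0" if i: "Some \<alpha> \<in> F" for \<alpha>
  proof -
    have al: "\<alpha> \<in> \<Lambda>" "a (Some \<alpha>) \<in> root_sp \<alpha>" using F(2,3) i by auto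
    obtain h where h: "h \<in> H\<^sub>0" "\<alpha> h \<noteq> 0" using roots_nonzero[OF al(1)] by blast
    define c where "c j = phi_inv (br h (a j))" for j
    have "c j \<in> split_summand j" if j: "j \<in> F" for j
    proof (cases j)
      case None
      then have "a j \<in> H" using F(3) j by auto
      then show ?thesis
        unfolding c_def using None H_abelian H0_H[OF h(1)] subspace_0[OF H_subspace] by simp
    next
      case (Some \<gamma>)
      then have "a j \<in> root_sp \<gamma>" using F(3) j by auto
      then have "c j = sc (\<gamma> h) (a j)"
        unfolding c_def using root_spaceD[of "a j" \<gamma> h] h(1) by (simp add: phi_inv_scale)
      then show ?thesis using Some \<open>a j \<in> root_sp \<gamma>\<close> root_space_subspace subspace_scale by auto
    qed
    moreover have "sum c F = 0"
      using root_spaceD[OF v h(1)] unfolding c_def F(4)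
        by (simp add: bracket_sum_right flip: phi_inv_sum)
    ultimately have "c (Some \<alpha>) = 0"
      using internal_direct_sum_independent[OF split_direct_sum F(1,2)] i by blast
    moreover have "c (Some \<alpha>) = sc (\<alpha> h) (a (Some \<alpha>))"
      unfolding c_def using root_spaceD[OF al(2) h(1)] by (simp add: phi_inv_scale)
    ultimately show "a (Some \<alpha>) = 0" using h(2) by simp
  qed
  have "a i \<in> H" if "i \<in> F" for i
  proof (cases i)
    case None
    then show ?thesis using that F(3) by auto
  next
    case (Some \<alpha>)
    then show ?thesis using that root_parts subspace_0[OF H_subspace] by simp
  qed
  then show ?thesis unfolding F(4) by (rule subspace_sum[OF H_subspace])
qed

lemma H_root_spaces_disjoint:
  assumes "x \<in> H" "x \<in> span (\<Union>\<beta>\<in>\<Lambda>. root_sp \<beta>)" shows "x = 0"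
proof (rule internal_direct_sum_span_disjoint[OF split_direct_sum, of "{None}" "Some ` \<Lambda>"])
  show "x \<in> span (\<Union>i\<in>{None}. split_summand i)" using assms(1) by (simp add: span_base)
  show "x \<in> span (\<Union>i\<in>Some ` \<Lambda>. split_summand i)" using assms(2) by (simp add: image_image)
qed auto

lemma root_spaces_disjoint:
  assumes "A \<subseteq> \<Lambda>" "B \<subseteq> \<Lambda>" "A \<inter> B = {}"
    and "x \<in> span (\<Union>\<beta>\<in>A. root_sp \<beta>)" "x \<in> span (\<Union>\<beta>\<in>B. root_sp \<beta>)"
  shows "x = 0"
proof (rule internal_direct_sum_span_disjoint[OF split_direct_sum, of "Some ` A" "Some ` B"])
  show "x \<in> span (\<Union>i\<in>Some ` A. split_summand i)" "x \<in> span (\<Union>i\<in>Some ` B. split_summand i)"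
    using assms(4,5) by (simp_all add: image_image)
qed (use assms(1-3) in auto)

section \<open>Connections of roots\<close>

abbreviation "csum \<equiv> conn_sum phi H\<^sub>0"
abbreviation "conn \<equiv> connected sc Lg br phi H"

lemma csum_0: "as ! 0 \<in> dual \<Longrightarrow> csum as 0 = as ! 0"
  unfolding conn_sum_def by (simp add: shift_0)

lemma shift_phi_inv: "x \<in> H\<^sub>0 \<Longrightarrow> shift f k (phi_inv x) = shift f (Suc k) x"
  unfolding shift_eq by (simp add: phi_inv_H0 funpow_swap1)

lemma csum_Suc: "csum as (Suc i) = shift (\<lambda>x. csum as i x + (as ! Suc i) x) 1"
proof (rule ext)
  fix x
  have B: "(\<Sum>j\<in>{2..Suc i + 1}. shift (as ! (j - 1)) (Suc i + 2 - j) x) =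
      (\<Sum>j\<in>{2..i+1}. shift (as ! (j - 1)) (Suc (i + 2 - j)) x) + shift (as ! Suc i) 1 x"
  proof -
    have "{2..Suc i + 1} = insert (Suc i + 1) {2..i+1}" by auto
    then have "(\<Sum>j\<in>{2..Suc i + 1}. shift (as ! (j - 1)) (Suc i + 2 - j) x) =
       shift (as ! Suc i) 1 x + (\<Sum>j\<in>{2..i+1}. shift (as ! (j - 1)) (Suc i + 2 - j) x)" by simp
    also have "(\<Sum>j\<in>{2..i+1}. shift (as ! (j - 1)) (Suc i + 2 - j) x) =
       (\<Sum>j\<in>{2..i+1}. shift (as ! (j - 1)) (Suc (i + 2 - j)) x)"
      by (rule sum.cong) (auto simp: Suc_diff_le)
    finally show ?thesis by (simp add: add.commute)
  qed
  show "csum as (Suc i) x = shift (\<lambda>x. csum as i x + (as ! Suc i) x) 1 x"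
  proof (cases "x \<in> H\<^sub>0")
    case False
    then show ?thesis unfolding conn_sum_def shift_eq by simp
  next
    case True
    have "csum as (Suc i) x = shift (as ! 0) (Suc i) x
        + (\<Sum>j\<in>{2..i+1}. shift (as ! (j - 1)) (Suc (i + 2 - j)) x) + shift (as ! Suc i) 1 x"
      unfolding conn_sum_def using B by (simp add: add.assoc)
    also have "\<dots> = csum as i (phi_inv x) + shift (as ! Suc i) 1 x"
      by (simp only: conn_sum_def shift_phi_inv[OF True])
    also have "\<dots> = shift (\<lambda>x. csum as i x + (as ! Suc i) x) 1 x"
      using True by (simp add: shift_eq)
    finally show ?thesis .
  qed
qed

lemma csum_append: "i < length as \<Longrightarrow> csum (as @ xs) i = csum as i"
  unfolding conn_sum_def
  by (rule ext) (auto simp: nth_append intro!: sum.cong)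

text \<open>By \<open>csum_Suc\<close>, the partial sums of a connection satisfy
  \<open>csum as (i + 1) = (csum as i + as ! (i + 1)) \<phi>\<^sup>-\<^sup>1\<close>. Hence a connection from \<open>\<alpha>\<close> to \<open>\<beta>\<close>
  is the same as a walk of \<open>root_step\<close>s from some \<open>\<alpha>\<phi>\<^sup>-\<^sup>n\<close> to some \<open>\<plusminus>\<beta>\<phi>\<^sup>-\<^sup>m\<close>, and for walks
  symmetry and transitivity are straightforward.\<close>

definition root_step :: "('v \<Rightarrow> 'k) \<Rightarrow> ('v \<Rightarrow> 'k) \<Rightarrow> bool" where
  "root_step a b \<longleftrightarrow> a \<in> \<Lambda> \<and> b \<in> \<Lambda> \<and> (\<exists>r\<in>\<Lambda>. b = shift (\<lambda>x. a x + r x) 1)"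

definition chain_connected :: "('v \<Rightarrow> 'k) \<Rightarrow> ('v \<Rightarrow> 'k) \<Rightarrow> bool" where
  "chain_connected \<alpha> \<beta> \<longleftrightarrow>
    (\<exists>n m b. (b = shift \<beta> m \<or> b = (\<lambda>x. - shift \<beta> m x)) \<and> root_step\<^sup>*\<^sup>* (shift \<alpha> n) b)"

lemma target_roots: "\<beta> \<in> \<Lambda> \<Longrightarrow> (b = shift \<beta> m \<or> b = (\<lambda>x. - shift \<beta> m x)) \<Longrightarrow> b \<in> \<Lambda>"
  using shift_roots uminus_roots by blast

lemma csum_root_steps:
  assumes as: "set as \<subseteq> \<Lambda>" "\<forall>i<length as. csum as i \<in> \<Lambda>" and i: "i < length as"
  shows "root_step\<^sup>*\<^sup>* (csum as 0) (csum as i)"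
  using i
proof (induct i)
  case 0 then show ?case by simp
next
  case (Suc i)
  have "as ! Suc i \<in> \<Lambda>" using Suc(2) as(1) nth_mem by blast
  moreover have "csum as i \<in> \<Lambda>" "csum as (Suc i) \<in> \<Lambda>" using as(2) Suc(2) by auto
  ultimately have "root_step (csum as i) (csum as (Suc i))" unfolding root_step_def
    by (auto simp: csum_Suc)
  with Suc show ?case by (meson Suc_lessD rtranclp.rtrancl_into_rtrancl)
qed

lemma connected_imp_chain_connected:
  assumes a: "\<alpha> \<in> \<Lambda>" "\<beta> \<in> \<Lambda>" and c: "conn \<alpha> \<beta>"
  shows "chain_connected \<alpha> \<beta>"
proof -
  from c obtain as where as: "length as \<ge> 1" "set as \<subseteq> \<Lambda>"
    and rest: "if length as = 1 then as ! 0 \<in> {shift \<alpha> n | n. True} \<inter>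
                 ({shift \<beta> m | m. True} \<union> {(\<lambda>x. - shift \<beta> m x) | m. True})
         else as ! 0 \<in> {shift \<alpha> n | n. True} \<and>
              (\<forall>i\<in>{1..length as - 2}. csum as i \<in> \<Lambda>) \<and>
              csum as (length as - 1) \<in> ({shift \<beta> m | m. True} \<union> {(\<lambda>x. - shift \<beta> m x) | m. True})"
    unfolding connected_def Let_def by blast
  define k where "k = length as"
  have "as ! 0 \<in> set as" using as(1) by (cases as) auto
  then have a0: "as ! 0 \<in> \<Lambda>" using as(2) by blast
  have cs0: "csum as 0 = as ! 0" using csum_0 roots_dual[OF a0] by simp
  have F: "as ! 0 \<in> {shift \<alpha> n | n. True}"
    and L: "csum as (k - 1) \<in> ({shift \<beta> m | m. True} \<union> {(\<lambda>x. - shift \<beta> m x) | m. True})"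
    and M: "\<forall>i\<in>{1..k - 2}. csum as i \<in> \<Lambda>"
    using rest cs0 unfolding k_def by (auto split: if_splits)
  obtain n where n: "as ! 0 = shift \<alpha> n" using F by blast
  obtain m b where b: "b = csum as (k - 1)" "b = shift \<beta> m \<or> b = (\<lambda>x. - shift \<beta> m x)"
    using L by blast
  have "csum as i \<in> \<Lambda>" if i: "i < k" for i
  proof -
    consider "i = 0" | "i = k - 1" | "i \<in> {1..k - 2}" using i by fastforce
    then show ?thesis
    proof cases
      case 1 then show ?thesis using a0 cs0 by simp
    next
      case 2 then show ?thesis using b target_roots[OF a(2)] by blast
    next
      case 3 then show ?thesis using M by blast
    qed
  qed
  then have "root_step\<^sup>*\<^sup>* (csum as 0) (csum as (k - 1))"
    using csum_root_steps[OF as(2)] as(1) unfolding k_def by simp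
  then have "root_step\<^sup>*\<^sup>* (shift \<alpha> n) b" using b(1) cs0 n by simp
  then show ?thesis unfolding chain_connected_def using b(2) by blast
qed

lemma root_steps_csum_list:
  assumes "root_step\<^sup>*\<^sup>* a b" "a \<in> \<Lambda>"
  shows "\<exists>as. length as \<ge> 1 \<and> set as \<subseteq> \<Lambda> \<and> as ! 0 = a \<and> (\<forall>i<length as. csum as i \<in> \<Lambda>)
           \<and> csum as (length as - 1) = b"
  using assms(1)
proof (induct rule: rtranclp_induct)
  case base
  show ?case using assms(2) csum_0[of "[a]"] roots_dual by (intro exI[of _ "[a]"]) auto
next
  case (step b c)
  then obtain as where as: "length as \<ge> 1" "set as \<subseteq> \<Lambda>" "as ! 0 = a" "\<forall>i<length as. csum as i \<in> \<Lambda>"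
    "csum as (length as - 1) = b" by blast
  from step(2) obtain r where r: "r \<in> \<Lambda>" "c = shift (\<lambda>x. b x + r x) 1" "c \<in> \<Lambda>"
    unfolding root_step_def by blast
  define bs where "bs = as @ [r]"
  have l: "length bs = Suc (length as)" unfolding bs_def by simp
  have pre: "\<forall>i<length as. csum bs i = csum as i" unfolding bs_def using csum_append by blast
  have "csum bs (length as) = c"
  proof -
    have "length as = Suc (length as - 1)" using as(1) by simp
    then have "csum bs (length as) = shift (\<lambda>x. csum bs (length as - 1) x + (bs ! (length as)) x) 1"
      using csum_Suc by metis
    also have "\<dots> = c" using pre as(1,5) r(2) unfolding bs_def by simp
    finally show ?thesis .
  qed
  moreover have "\<forall>i<length bs. csum bs i \<in> \<Lambda>"
    using pre as(4) \<open>csum bs (length as) = c\<close> r(3) l less_Suc_eq by auto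
  moreover have "bs ! 0 = a" using as(1,3) unfolding bs_def by (cases as) auto
  ultimately show ?case using l as r unfolding bs_def by (intro exI[of _ "as @ [r]"]) auto
qed

lemma chain_connected_imp_connected:
  assumes a: "\<alpha> \<in> \<Lambda>" "\<beta> \<in> \<Lambda>" and c: "chain_connected \<alpha> \<beta>"
  shows "conn \<alpha> \<beta>"
proof -
  from c obtain n m b where b: "b = shift \<beta> m \<or> b = (\<lambda>x. - shift \<beta> m x)" "root_step\<^sup>*\<^sup>* (shift \<alpha> n) b"
    unfolding chain_connected_def by blast
  obtain as where as: "length as \<ge> 1" "set as \<subseteq> \<Lambda>" "as ! 0 = shift \<alpha> n"
      "\<forall>i<length as. csum as i \<in> \<Lambda>"
    "csum as (length as - 1) = b" using root_steps_csum_list[OF b(2) shift_roots[OF a(1)]] by blast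
  have bF: "b \<in> {shift \<beta> m | m. True} \<union> {(\<lambda>x. - shift \<beta> m x) | m. True}" using b(1) by blast
  have cs0: "csum as 0 = as ! 0" using csum_0 roots_dual as(3) shift_roots[OF a(1)] by simp
  show ?thesis unfolding connected_def Let_def
  proof (intro exI[of _ as] conjI)
    show "1 \<le> length as" "set as \<subseteq> \<Lambda>" using as by auto
    show "if length as = 1 then as ! 0 \<in> {shift \<alpha> n | n. True} \<inter>
                 ({shift \<beta> m | m. True} \<union> {(\<lambda>x. - shift \<beta> m x) | m. True})
         else as ! 0 \<in> {shift \<alpha> n | n. True} \<and>
              (\<forall>i\<in>{1..length as - 2}. csum as i \<in> \<Lambda>) \<and>
              csum as (length as - 1) \<in> ({shift \<beta> m | m. True} \<union> {(\<lambda>x. - shift \<beta> m x) | m. True})"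
    proof (cases "length as = 1")
      case True
      then have "as ! 0 = b" using as(5) cs0 by simp
      then show ?thesis using True bF as(3) by auto
    next
      case False
      have "\<forall>i\<in>{1..length as - 2}. csum as i \<in> \<Lambda>" using as(4) as(1) by auto
      then show ?thesis using False bF as(3,5) by auto
    qed
  qed
qed

lemma connected_iff_chain_connected: "\<alpha> \<in> \<Lambda> \<Longrightarrow> \<beta> \<in> \<Lambda> \<Longrightarrow> conn \<alpha> \<beta> \<longleftrightarrow> chain_connected \<alpha> \<beta>"
  using connected_imp_chain_connected chain_connected_imp_connected by blast

lemma root_step_shift1: "root_step a b \<Longrightarrow> root_step (shift a 1) (shift b 1)"
proof -
  assume "root_step a b"
  then obtain r where r: "a \<in> \<Lambda>" "b \<in> \<Lambda>" "r \<in> \<Lambda>" "b = shift (\<lambda>x. a x + r x) 1"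
    unfolding root_step_def by blast
  have "shift b 1 = shift (\<lambda>x. shift a 1 x + shift r 1 x) 1" using r(4) shift_plus[of a r 1] by simp
  moreover have "shift a 1 \<in> \<Lambda>" "shift b 1 \<in> \<Lambda>" "shift r 1 \<in> \<Lambda>" using r shift_roots by auto
  ultimately show ?thesis unfolding root_step_def by blast
qed

lemma root_step_shift: "root_step a b \<Longrightarrow> root_step (shift a n) (shift b n)"
proof (induct n)
  case 0
  then have "a \<in> \<Lambda>" "b \<in> \<Lambda>" unfolding root_step_def by auto
  then show ?case using 0 shift_0 roots_dual by simp
next
  case (Suc n)
  then have "root_step (shift (shift a n) 1) (shift (shift b n) 1)"
    using root_step_shift1[of "shift a n" "shift b n"] by blast
  then show ?case by (simp only: shift_Suc)
qed

lemma root_steps_shift: "root_step\<^sup>*\<^sup>* a b \<Longrightarrow> root_step\<^sup>*\<^sup>* (shift a n) (shift b n)"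
proof (induct rule: rtranclp_induct)
  case base then show ?case by simp
next
  case (step b c)
  then show ?case using root_step_shift[OF step(2), of n] by (meson rtranclp.rtrancl_into_rtrancl)
qed

lemma root_step_uminus: "root_step a b \<Longrightarrow> root_step (\<lambda>x. - a x) (\<lambda>x. - b x)"
proof -
  assume "root_step a b"
  then obtain r where r: "a \<in> \<Lambda>" "b \<in> \<Lambda>" "r \<in> \<Lambda>" "b = shift (\<lambda>x. a x + r x) 1"
    unfolding root_step_def by blast
  have "(\<lambda>x. - b x) = shift (\<lambda>x. - (a x + r x)) 1" using r(4) shift_uminus[of "\<lambda>x. a x + r x" 1]
    by simp
  also have "(\<lambda>x. - (a x + r x)) = (\<lambda>x. (- a x) + (- r x))" by (rule ext) simp
  finally have e: "(\<lambda>x. - b x) = shift (\<lambda>x. (- a x) + (- r x)) 1" .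
  have l: "(\<lambda>x. - a x) \<in> \<Lambda>" "(\<lambda>x. - b x) \<in> \<Lambda>" "(\<lambda>x. - r x) \<in> \<Lambda>" using r uminus_roots by auto
  show ?thesis unfolding root_step_def
    by (intro conjI bexI[of _ "\<lambda>x. - r x"]) (use e l in auto)
qed

lemma root_steps_uminus: "root_step\<^sup>*\<^sup>* a b \<Longrightarrow> root_step\<^sup>*\<^sup>* (\<lambda>x. - a x) (\<lambda>x. - b x)"
proof (induct rule: rtranclp_induct)
  case base then show ?case by simp
next
  case (step b c)
  then show ?case using root_step_uminus[OF step(2)] by (meson rtranclp.rtrancl_into_rtrancl)
qed

text \<open>A step by \<open>r\<close> is undone by a step by \<open>-r\<phi>\<^sup>-\<^sup>1\<close>, up to a shift; this is where the
  symmetry of the root system enters.\<close>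
lemma root_step_reverse: "root_step a b \<Longrightarrow> root_step b (shift a 2)"
proof -
  assume "root_step a b"
  then obtain r where r: "a \<in> \<Lambda>" "b \<in> \<Lambda>" "r \<in> \<Lambda>" "b = shift (\<lambda>x. a x + r x) 1"
    unfolding root_step_def by blast
  have "(\<lambda>x. b x + (- shift r 1 x)) = (\<lambda>x. shift a 1 x + shift r 1 x + (- shift r 1 x))"
    using r(4) shift_plus[of a r 1] by simp
  also have "\<dots> = shift a 1" by simp
  finally have e0: "(\<lambda>x. b x + (- shift r 1 x)) = shift a 1" .
  have e: "shift (\<lambda>x. b x + (- shift r 1 x)) 1 = shift a 2" unfolding e0 shift_shift
    by (simp add: numeral_2_eq_2)
  have l: "(\<lambda>x. - shift r 1 x) \<in> \<Lambda>" "shift a 2 \<in> \<Lambda>" using r uminus_roots shift_roots by auto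
  show ?thesis unfolding root_step_def
    by (intro conjI bexI[of _ "\<lambda>x. - shift r 1 x"]) (use e l r in auto)
qed

lemma root_steps_reverse: "root_step\<^sup>*\<^sup>* a b \<Longrightarrow> a \<in> \<Lambda> \<Longrightarrow> \<exists>p. root_step\<^sup>*\<^sup>* b (shift a p)"
proof (induct rule: rtranclp_induct)
  case base then show ?case using shift_0 roots_dual by (intro exI[of _ 0]) simp
next
  case (step b c)
  then obtain p where p: "root_step\<^sup>*\<^sup>* b (shift a p)" by blast
  have "root_step c (shift b 2)" using root_step_reverse[OF step(2)] .
  moreover have "root_step\<^sup>*\<^sup>* (shift b 2) (shift a (p + 2))" using root_steps_shift[OF p, of 2]
    by (simp add: shift_shift)
  ultimately show ?case by (meson converse_rtranclp_into_rtranclp)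
qed

lemma chain_connected_sym: "\<alpha> \<in> \<Lambda> \<Longrightarrow> \<beta> \<in> \<Lambda> \<Longrightarrow> chain_connected \<alpha> \<beta> \<Longrightarrow> chain_connected \<beta> \<alpha>"
proof -
  assume a: "\<alpha> \<in> \<Lambda>" "\<beta> \<in> \<Lambda>" "chain_connected \<alpha> \<beta>"
  then obtain n m b where b: "b = shift \<beta> m \<or> b = (\<lambda>x. - shift \<beta> m x)" "root_step\<^sup>*\<^sup>* (shift \<alpha> n) b"
    unfolding chain_connected_def by blast
  obtain p where p: "root_step\<^sup>*\<^sup>* b (shift (shift \<alpha> n) p)"
    using root_steps_reverse[OF b(2) shift_roots[OF a(1)]] by blast
  then have p': "root_step\<^sup>*\<^sup>* b (shift \<alpha> (n + p))" by (simp add: shift_shift)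
  show ?thesis
  proof (cases "b = shift \<beta> m")
    case True
    then show ?thesis unfolding chain_connected_def using p' by blast
  next
    case False
    then have bb: "b = (\<lambda>x. - shift \<beta> m x)" using b(1) by blast
    have "root_step\<^sup>*\<^sup>* (\<lambda>x. - b x) (\<lambda>x. - shift \<alpha> (n + p) x)" using root_steps_uminus[OF p'] .
    then have "root_step\<^sup>*\<^sup>* (shift \<beta> m) (\<lambda>x. - shift \<alpha> (n + p) x)" using bb by simp
    then show ?thesis unfolding chain_connected_def by blast
  qed
qed

lemma chain_connected_trans:
  "\<alpha> \<in> \<Lambda> \<Longrightarrow> \<beta> \<in> \<Lambda> \<Longrightarrow> \<gamma> \<in> \<Lambda> \<Longrightarrow> chain_connected \<alpha> \<beta> \<Longrightarrow> chain_connected \<beta> \<gamma> \<Longrightarrow>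
    chain_connected \<alpha> \<gamma>"
proof -
  assume a: "\<alpha> \<in> \<Lambda>" "\<beta> \<in> \<Lambda>" "\<gamma> \<in> \<Lambda>" "chain_connected \<alpha> \<beta>" "chain_connected \<beta> \<gamma>"
  then obtain n1 m1 b1
    where b1: "b1 = shift \<beta> m1 \<or> b1 = (\<lambda>x. - shift \<beta> m1 x)" "root_step\<^sup>*\<^sup>* (shift \<alpha> n1) b1"
    unfolding chain_connected_def by blast
  obtain n2 m2 b2
    where b2: "b2 = shift \<gamma> m2 \<or> b2 = (\<lambda>x. - shift \<gamma> m2 x)" "root_step\<^sup>*\<^sup>* (shift \<beta> n2) b2"
    using a unfolding chain_connected_def by blast
  have P1: "root_step\<^sup>*\<^sup>* (shift \<alpha> (n1 + n2)) (shift b1 n2)" using root_steps_shift[OF b1(2), of n2]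
    by (simp add: shift_shift)
  have P2: "root_step\<^sup>*\<^sup>* (shift \<beta> (m1 + n2)) (shift b2 m1)" using root_steps_shift[OF b2(2), of m1]
    by (simp add: shift_shift add.commute)
  have e2: "shift b2 m1 = shift \<gamma> (m2 + m1) \<or> shift b2 m1 = (\<lambda>x. - shift \<gamma> (m2 + m1) x)"
    using b2(1) by (auto simp: shift_shift shift_uminus)
  show ?thesis
  proof (cases "b1 = shift \<beta> m1")
    case True
    then have "shift b1 n2 = shift \<beta> (m1 + n2)" by (simp add: shift_shift)
    then have "root_step\<^sup>*\<^sup>* (shift \<alpha> (n1 + n2)) (shift b2 m1)" using P1 P2 by simp
    then show ?thesis unfolding chain_connected_def using e2 by blast
  next
    case False
    then have "b1 = (\<lambda>x. - shift \<beta> m1 x)" using b1(1) by blast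
    then have "shift b1 n2 = (\<lambda>x. - shift \<beta> (m1 + n2) x)" by (simp add: shift_shift shift_uminus)
    moreover have "root_step\<^sup>*\<^sup>* (\<lambda>x. - shift \<beta> (m1 + n2) x) (\<lambda>x. - shift b2 m1 x)"
      using root_steps_uminus[OF P2] .
    ultimately have Q: "root_step\<^sup>*\<^sup>* (shift \<alpha> (n1 + n2)) (\<lambda>x. - shift b2 m1 x)" using P1 by simp
    have "(\<lambda>x. - shift b2 m1 x) = shift \<gamma> (m2 + m1) \<or>
        (\<lambda>x. - shift b2 m1 x) = (\<lambda>x. - shift \<gamma> (m2 + m1) x)"
      using e2 by auto
    then show ?thesis unfolding chain_connected_def using Q by blast
  qed
qed

lemma connected_sym: "\<alpha> \<in> \<Lambda> \<Longrightarrow> \<beta> \<in> \<Lambda> \<Longrightarrow> conn \<alpha> \<beta> \<Longrightarrow> conn \<beta> \<alpha>"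
  using connected_iff_chain_connected chain_connected_sym by blast

lemma connected_trans: "\<alpha> \<in> \<Lambda> \<Longrightarrow> \<beta> \<in> \<Lambda> \<Longrightarrow> \<gamma> \<in> \<Lambda> \<Longrightarrow> conn \<alpha> \<beta> \<Longrightarrow> conn \<beta> \<gamma> \<Longrightarrow> conn \<alpha> \<gamma>"
  using connected_iff_chain_connected chain_connected_trans by blast

lemma connected_refl: "\<alpha> \<in> \<Lambda> \<Longrightarrow> conn \<alpha> \<alpha>"
  using connected_iff_chain_connected[of \<alpha> \<alpha>] unfolding chain_connected_def by blast

lemma connected_shift1: "\<alpha> \<in> \<Lambda> \<Longrightarrow> conn \<alpha> (shift \<alpha> 1)"
proof -
  assume a: "\<alpha> \<in> \<Lambda>"
  have "shift (shift \<alpha> 1) 0 = shift \<alpha> 1" using shift_0 shift_roots[OF a] roots_dual by blast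
  then have "chain_connected \<alpha> (shift \<alpha> 1)" unfolding chain_connected_def
    by (metis rtranclp.rtrancl_refl)
  then show ?thesis using connected_iff_chain_connected a shift_roots by blast
qed

lemma connected_uminus: "\<alpha> \<in> \<Lambda> \<Longrightarrow> conn \<alpha> (\<lambda>x. - \<alpha> x)"
proof -
  assume a: "\<alpha> \<in> \<Lambda>"
  have "shift (\<lambda>x. - \<alpha> x) 0 = (\<lambda>x. - \<alpha> x)" using shift_0 uminus_roots[OF a] roots_dual by blast
  then have e: "(\<lambda>x. - shift (\<lambda>x. - \<alpha> x) 0 x) = shift \<alpha> 0" using shift_0 a roots_dual by simp
  have "chain_connected \<alpha> (\<lambda>x. - \<alpha> x)" unfolding chain_connected_def
    by (rule exI[of _ 0], rule exI[of _ 0], rule exI[of _ "shift \<alpha> 0"]) (use e in auto)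
  then show ?thesis using connected_iff_chain_connected a uminus_roots by blast
qed

lemma connected_unshift: "\<alpha> \<in> \<Lambda> \<Longrightarrow> conn \<alpha> (unshift \<alpha>)"
proof -
  assume a: "\<alpha> \<in> \<Lambda>"
  have "shift (unshift \<alpha>) 1 = shift \<alpha> 0" using shift_unshift shift_0 a roots_dual by simp
  then have "chain_connected (unshift \<alpha>) \<alpha>" unfolding chain_connected_def
    by (metis rtranclp.rtrancl_refl)
  then have "conn (unshift \<alpha>) \<alpha>" using connected_iff_chain_connected a unshift_roots by blast
  then show ?thesis using connected_sym a unshift_roots by blast
qed

lemma connected_step:
  "\<beta> \<in> \<Lambda> \<Longrightarrow> \<delta> \<in> \<Lambda> \<Longrightarrow> shift (\<lambda>x. \<beta> x + \<delta> x) 1 \<in> \<Lambda> \<Longrightarrow> conn \<beta> (shift (\<lambda>x. \<beta> x + \<delta> x) 1)"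
proof -
  assume a: "\<beta> \<in> \<Lambda>" "\<delta> \<in> \<Lambda>" "shift (\<lambda>x. \<beta> x + \<delta> x) 1 \<in> \<Lambda>"
  have "root_step \<beta> (shift (\<lambda>x. \<beta> x + \<delta> x) 1)" unfolding root_step_def using a by blast
  moreover have "shift \<beta> 0 = \<beta>" "shift (shift (\<lambda>x. \<beta> x + \<delta> x) 1) 0 = shift (\<lambda>x. \<beta> x + \<delta> x) 1"
    using shift_0 a roots_dual by auto
  ultimately have "chain_connected \<beta> (shift (\<lambda>x. \<beta> x + \<delta> x) 1)" unfolding chain_connected_def
    by (metis r_into_rtranclp)
  then show ?thesis using connected_iff_chain_connected a by blast
qed

lemma connected_summands: "\<beta> \<in> \<Lambda> \<Longrightarrow> \<delta> \<in> \<Lambda> \<Longrightarrow> shift (\<lambda>x. \<beta> x + \<delta> x) 1 \<in> \<Lambda> \<Longrightarrow> conn \<beta> \<delta>"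
proof -
  assume a: "\<beta> \<in> \<Lambda>" "\<delta> \<in> \<Lambda>" "shift (\<lambda>x. \<beta> x + \<delta> x) 1 \<in> \<Lambda>"
  have "(\<lambda>x. \<delta> x + \<beta> x) = (\<lambda>x. \<beta> x + \<delta> x)" by (rule ext) (simp add: add.commute)
  then have "conn \<delta> (shift (\<lambda>x. \<beta> x + \<delta> x) 1)" using connected_step[of \<delta> \<beta>] a by simp
  then show ?thesis using connected_step[OF a] connected_sym connected_trans a by blast
qed

section \<open>Brackets of root spaces\<close>

lemma root_space_graded:
  assumes v: "v \<in> root_sp \<alpha>"
  shows "v \<in> span (\<Union>g. root_sp \<alpha> \<inter> Lg g)"
proof -
  have "v \<in> span (\<Union>g. Lg g)" using grading_spans by simp
  from this[unfolded span_UN_subspaces_iff[OF grading_subspaces]]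
  obtain F a where F: "finite F" "\<forall>i\<in>F. a i \<in> Lg i" "v = sum a F" by blast
  have "\<forall>i\<in>F. a i \<in> root_sp \<alpha>"
  proof
    fix i assume i: "i \<in> F"
    show "a i \<in> root_sp \<alpha>"
    proof (rule root_spaceI)
      fix h assume h: "h \<in> H\<^sub>0"
      define c where "c j = br h (a j) - sc (\<alpha> h) (phi (a j))" for j
      have "\<forall>j\<in>F. c j \<in> Lg j"
      proof
        fix j assume j: "j \<in> F"
        have "br h (a j) \<in> Lg j" using bracket_grading[OF H0_L0[OF h], of "a j" j] F(2) j by simp
        moreover have "sc (\<alpha> h) (phi (a j)) \<in> Lg j"
          using phi_grading F(2) j grading_subspace subspace_scale by blast
        ultimately show "c j \<in> Lg j" unfolding c_def using grading_subspace subspace_diff by blast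
      qed
      moreover have "sum c F = 0"
        using root_spaceD[OF v h] F(3) unfolding c_def
        by (simp add: sum_subtractf bracket_sum_right phi_sum scale_sum_right)
      ultimately have "c i = 0" using internal_direct_sum_independent[OF grading F(1)] i by blast
      then show "br h (a i) = sc (\<alpha> h) (phi (a i))" unfolding c_def by simp
    qed
  qed
  then show ?thesis unfolding F(3) using F(2) by (intro span_sum) (auto intro: span_base)
qed

lemma bracket_root_spaces_homogeneous:
  assumes x: "x \<in> root_sp \<alpha>" "x \<in> Lg a" and y: "y \<in> root_sp \<beta>" "y \<in> Lg b"
  shows "br x y \<in> root_sp (shift (\<lambda>h. \<alpha> h + \<beta> h) 1)"
proof (rule root_spaceI)
  fix h assume h: "h \<in> H\<^sub>0"
  \<comment> \<open>Hom-Jacobi for \<open>h' = \<phi>\<^sup>-\<^sup>1 h\<close> of degree 0, with the two terms containing \<open>h'\<close> inside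
     evaluated by skew-symmetry and the root space equations.\<close>
  define h' where "h' = phi_inv h"
  have h': "h' \<in> H\<^sub>0" "h' \<in> Lg 0" "phi h' = h" unfolding h'_def using phi_inv_H0[OF h] H0_L0 by auto
  define P where "P = phi (br x y)"
  have J: "sc (eps b 0) (br (phi h') (br x y)) + sc (eps 0 a) (br (phi x) (br y h'))
         + sc (eps a b) (br (phi y) (br h' x)) = 0"
    using hom_jacobi[OF h'(2) x(2) y(2)] .
  have 1: "br y h' = - sc (\<beta> h') (phi y)"
    using bracket_skew[OF y(2) h'(2)] root_spaceD[OF y(1) h'(1)] eps_zero_right by simp
  have 2: "br (phi x) (br y h') = - sc (\<beta> h') P"
    unfolding 1 P_def by (simp add: bracket_uminus_right bracket_scale_right phi_bracket)
  have 3: "br h' x = sc (\<alpha> h') (phi x)" using root_spaceD[OF x(1) h'(1)] .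
  have 4: "br (phi y) (phi x) = - sc (eps b a) P"
    unfolding P_def phi_bracket using bracket_skew[OF phi_grading[OF y(2)] phi_grading[OF x(2)]] .
  have 5: "sc (eps a b) (br (phi y) (br h' x)) = - sc (\<alpha> h') P"
    unfolding 3 bracket_scale_right 4 using eps_mult_swap[of a b] by (simp add: scale_left_commute)
  have "br h (br x y) - sc (\<beta> h') P - sc (\<alpha> h') P = 0"
    using J eps_zero_left eps_zero_right 2 5 h'(3) by (simp add: algebra_simps)
  then have "br h (br x y) = sc (\<alpha> h' + \<beta> h') P" by (simp add: algebra_simps)
  moreover have "shift (\<lambda>h. \<alpha> h + \<beta> h) 1 h = \<alpha> h' + \<beta> h'" using h unfolding shift_eq h'_def by simp
  ultimately show "br h (br x y) = sc (shift (\<lambda>h. \<alpha> h + \<beta> h) 1 h) (phi (br x y))" unfolding P_def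
    by simp
qed

lemma bracket_root_spaces:
  assumes x: "x \<in> root_sp \<alpha>" and y: "y \<in> root_sp \<beta>"
  shows "br x y \<in> root_sp (shift (\<lambda>h. \<alpha> h + \<beta> h) 1)"
proof (rule bracket_span_subspace[OF root_space_subspace])
  show "x \<in> span (\<Union>g. root_sp \<alpha> \<inter> Lg g)" "y \<in> span (\<Union>g. root_sp \<beta> \<inter> Lg g)"
    using root_space_graded x y by blast+
qed (use bracket_root_spaces_homogeneous in blast)

lemma H_root_space_zero: "v \<in> H \<Longrightarrow> v \<in> root_sp (\<lambda>_. 0)"
  by (rule root_spaceI) (simp add: H_abelian H0_H)

lemma shift_zero: "shift (\<lambda>_. 0) n = (\<lambda>_. 0)"
  unfolding shift_eq by (rule ext) simp

lemma bracket_opposite_root_spaces: "x \<in> root_sp \<beta> \<Longrightarrow> y \<in> root_sp (\<lambda>h. - \<beta> h) \<Longrightarrow> br x y \<in> H"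
proof -
  assume "x \<in> root_sp \<beta>" "y \<in> root_sp (\<lambda>h. - \<beta> h)"
  then have "br x y \<in> root_sp (shift (\<lambda>h. \<beta> h + - \<beta> h) 1)" by (rule bracket_root_spaces)
  moreover have "shift (\<lambda>h. \<beta> h + - \<beta> h) 1 = (\<lambda>_. 0)" by (simp add: shift_zero)
  ultimately have "br x y \<in> root_sp (\<lambda>_. 0)" by simp
  then show "br x y \<in> H" by (rule root_space_zero_H)
qed

lemma shift_plus_eq_zero:
  assumes "\<beta> \<in> dual" "\<delta> \<in> dual" "shift (\<lambda>x. \<beta> x + \<delta> x) 1 = (\<lambda>_. 0)"
  shows "\<delta> = (\<lambda>x. - \<beta> x)"
proof
  fix x show "\<delta> x = - \<beta> x"
  proof (cases "x \<in> H\<^sub>0")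
    case True
    have "shift (\<lambda>x. \<beta> x + \<delta> x) 1 (phi x) = \<beta> x + \<delta> x"
      using phi_H0[OF True] by (simp add: shift_eq)
    then show ?thesis using assms(3) by (simp add: eq_neg_iff_add_eq_0 add.commute)
  next
    case False
    then show ?thesis using dual_outside[OF assms(1) False] dual_outside[OF assms(2) False] by simp
  qed
qed

lemma shift_sum_cases:
  assumes "\<beta> \<in> \<Lambda>" "\<delta> \<in> \<Lambda>"
  obtains "shift (\<lambda>x. \<beta> x + \<delta> x) 1 \<in> \<Lambda>"
    | "\<delta> = (\<lambda>x. - \<beta> x)"
    | "root_sp (shift (\<lambda>x. \<beta> x + \<delta> x) 1) = {0}"
proof -
  have "shift (\<lambda>x. \<beta> x + \<delta> x) 1 \<in> dual"
    using assms by (intro shift_dual dual_plus roots_dual)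
  then show ?thesis
    using that shift_plus_eq_zero[OF roots_dual[OF assms(1)] roots_dual[OF assms(2)]]
    unfolding roots_def by blast
qed

section \<open>The ideals of the connection classes\<close>

abbreviation "root_cls \<equiv> root_class sc Lg br phi H"
abbreviation "Hpart \<equiv> H_part sc Lg br phi H"
abbreviation "Vpart \<equiv> V_part sc Lg br phi H"
abbreviation "Lpart \<equiv> L_part sc Lg br phi H"

lemma root_class_iff: "\<beta> \<in> root_cls \<alpha> \<longleftrightarrow> \<beta> \<in> \<Lambda> \<and> conn \<beta> \<alpha>"
  unfolding root_class_def by blast

lemma root_class_roots: "\<beta> \<in> root_cls \<alpha> \<Longrightarrow> \<beta> \<in> \<Lambda>"
  unfolding root_class_iff by blast

lemma root_class_self: "\<alpha> \<in> \<Lambda> \<Longrightarrow> \<alpha> \<in> root_cls \<alpha>"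
  unfolding root_class_iff using connected_refl by blast

lemma root_class_connected:
  assumes "\<alpha> \<in> \<Lambda>" "\<beta> \<in> root_cls \<alpha>" "\<gamma> \<in> \<Lambda>" "conn \<beta> \<gamma>"
  shows "\<gamma> \<in> root_cls \<alpha>"
proof -
  have "\<beta> \<in> \<Lambda>" "conn \<beta> \<alpha>" using assms(2) root_class_iff by auto
  then have "conn \<gamma> \<alpha>"
    using connected_trans[OF assms(3) _ assms(1) connected_sym[OF _ assms(3,4)]] by blast
  then show ?thesis using assms(3) root_class_iff by blast
qed

lemma root_class_eq:
  assumes a: "\<alpha> \<in> \<Lambda>" "\<beta> \<in> root_cls \<alpha>"
  shows "root_cls \<beta> = root_cls \<alpha>"
proof -
  have b: "\<beta> \<in> \<Lambda>" "conn \<beta> \<alpha>" using a(2) root_class_iff by auto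
  show ?thesis
  proof (intro set_eqI iffI)
    fix x assume "x \<in> root_cls \<beta>"
    then show "x \<in> root_cls \<alpha>" using connected_trans[of x \<beta> \<alpha>] b a(1) root_class_iff by blast
  next
    fix x assume "x \<in> root_cls \<alpha>"
    then show "x \<in> root_cls \<beta>"
      using connected_trans[of x \<alpha> \<beta>] connected_sym[OF b(1) a(1) b(2)] b(1) a(1) root_class_iff
      by blast
  qed
qed

lemma root_class_disjoint:
  "\<alpha> \<in> \<Lambda> \<Longrightarrow> \<gamma> \<in> \<Lambda> \<Longrightarrow> root_cls \<alpha> \<noteq> root_cls \<gamma> \<Longrightarrow> \<beta> \<in> root_cls \<alpha> \<Longrightarrow> \<beta> \<notin> root_cls \<gamma>"
  by (metis root_class_eq)

lemma root_class_shift1: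
  assumes "\<alpha> \<in> \<Lambda>" "\<beta> \<in> root_cls \<alpha>" shows "shift \<beta> 1 \<in> root_cls \<alpha>"
proof -
  have "\<beta> \<in> \<Lambda>" using root_class_roots[OF assms(2)] .
  then show ?thesis using root_class_connected[OF assms shift_roots connected_shift1] by blast
qed

lemma root_class_unshift:
  assumes "\<alpha> \<in> \<Lambda>" "\<beta> \<in> root_cls \<alpha>" shows "unshift \<beta> \<in> root_cls \<alpha>"
proof -
  have "\<beta> \<in> \<Lambda>" using root_class_roots[OF assms(2)] .
  then show ?thesis using root_class_connected[OF assms unshift_roots connected_unshift] by blast
qed

lemma root_class_uminus:
  assumes "\<alpha> \<in> \<Lambda>" "\<beta> \<in> root_cls \<alpha>" shows "(\<lambda>x. - \<beta> x) \<in> root_cls \<alpha>"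
proof -
  have "\<beta> \<in> \<Lambda>" using root_class_roots[OF assms(2)] .
  then show ?thesis using root_class_connected[OF assms uminus_roots connected_uminus] by blast
qed

lemma root_class_sum:
  assumes "\<alpha> \<in> \<Lambda>" "\<beta> \<in> root_cls \<alpha>" "\<delta> \<in> \<Lambda>" "shift (\<lambda>x. \<beta> x + \<delta> x) 1 \<in> \<Lambda>"
  shows "\<delta> \<in> root_cls \<alpha>" "shift (\<lambda>x. \<beta> x + \<delta> x) 1 \<in> root_cls \<alpha>"
proof -
  have b: "\<beta> \<in> \<Lambda>" using root_class_roots[OF assms(2)] .
  show "\<delta> \<in> root_cls \<alpha>"
    using root_class_connected[OF assms(1-3) connected_summands[OF b assms(3,4)]] .
  show "shift (\<lambda>x. \<beta> x + \<delta> x) 1 \<in> root_cls \<alpha>"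
    using root_class_connected[OF assms(1,2,4) connected_step[OF b assms(3,4)]] .
qed

lemma root_space_outside_class_sum:
  assumes a: "\<alpha> \<in> \<Lambda>" "\<beta> \<in> root_cls \<alpha>" "\<delta> \<in> \<Lambda>" "\<delta> \<notin> root_cls \<alpha>"
  shows "root_sp (shift (\<lambda>x. \<beta> x + \<delta> x) 1) = {0}"
  using shift_sum_cases[OF root_class_roots[OF a(2)] a(3)]
proof cases
  case 1
  then show ?thesis using root_class_sum(1)[OF a(1-3)] a(4) by blast
next
  case 2
  then show ?thesis using root_class_uminus[OF a(1,2)] a(4) by simp
qed

lemma bracket_root_spaces_other_class:
  assumes "\<alpha> \<in> \<Lambda>" "\<beta> \<in> root_cls \<alpha>" "\<delta> \<in> \<Lambda>" "\<delta> \<notin> root_cls \<alpha>"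
    and "x \<in> root_sp \<beta>" "y \<in> root_sp \<delta>"
  shows "br x y = 0"
  using bracket_root_spaces[OF assms(5,6)] root_space_outside_class_sum[OF assms(1-4)] by blast

lemma bracket_in_H_part:
  "\<beta> \<in> C \<Longrightarrow> x \<in> root_sp \<beta> \<Longrightarrow> y \<in> root_sp (\<lambda>h. - \<beta> h) \<Longrightarrow> br x y \<in> Hpart C"
  unfolding H_part_def by (rule span_base) blast

lemma H_part_H: "Hpart C \<subseteq> H"
  unfolding H_part_def
  by (rule span_minimal[OF _ H_subspace]) (auto intro: bracket_opposite_root_spaces)

lemma H_part_subspace: "subspace (Hpart C)"
  unfolding H_part_def by simp

text \<open>Apply Hom-Jacobi to \<open>x, y, \<phi>\<^sup>-\<^sup>1 v\<close>: the brackets \<open>[y, \<phi>\<^sup>-\<^sup>1 v]\<close> and \<open>[\<phi>\<^sup>-\<^sup>1 v, x]\<close> lie in root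
  spaces \<open>(\<plusminus>\<beta> + \<delta>\<phi>)\<phi>\<^sup>-\<^sup>1\<close> that vanish because \<open>\<delta>\<phi>\<close> is outside the class of \<open>\<beta>\<close>.\<close>
lemma H_part_generator_other_class_homogeneous:
  assumes a: "\<alpha> \<in> \<Lambda>" "\<beta> \<in> root_cls \<alpha>" "\<delta> \<in> \<Lambda>" "\<delta> \<notin> root_cls \<alpha>"
    and x: "x \<in> root_sp \<beta>" "x \<in> Lg p" and y: "y \<in> root_sp (\<lambda>h. - \<beta> h)" "y \<in> Lg q"
    and v: "v \<in> root_sp \<delta>" "v \<in> Lg r"
  shows "br (br x y) v = 0"
proof -
  define z where "z = phi_inv v"
  have z: "z \<in> root_sp (unshift \<delta>)" "z \<in> Lg r" "phi z = v"
    unfolding z_def using phi_inv_root_space[OF v(1)] phi_inv_grading[OF v(2)] by auto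
  have ud: "unshift \<delta> \<in> \<Lambda>" "unshift \<delta> \<notin> root_cls \<alpha>"
    using unshift_roots[OF a(3)] root_class_shift1[OF a(1), of "unshift \<delta>"]
      shift_unshift[OF roots_dual[OF a(3)]] a(4) by auto
  have "br y z \<in> root_sp (shift (\<lambda>h. - \<beta> h + unshift \<delta> h) 1)"
    by (rule bracket_root_spaces[OF y(1) z(1)])
  then have yz: "br y z = 0"
    using root_space_outside_class_sum[OF a(1) root_class_uminus[OF a(1,2)] ud] by simp
  have "br z x \<in> root_sp (shift (\<lambda>h. \<beta> h + unshift \<delta> h) 1)"
    using bracket_root_spaces[OF z(1) x(1)] by (simp add: add.commute)
  then have zx: "br z x = 0" using root_space_outside_class_sum[OF a(1,2) ud] by simp
  have "sc (eps q r) (br v (br x y)) = 0"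
    using hom_jacobi[OF x(2) y(2) z(2)] yz zx z(3) by simp
  then have "br v (br x y) = 0" using eps_nonzero by simp
  then show ?thesis using bracket_skew[OF bracket_grading[OF x(2) y(2)] v(2)] by simp
qed

lemma H_part_other_class:
  assumes a: "\<alpha> \<in> \<Lambda>" "\<delta> \<in> \<Lambda>" "\<delta> \<notin> root_cls \<alpha>"
    and h: "h \<in> Hpart (root_cls \<alpha>)" and v: "v \<in> root_sp \<delta>"
  shows "br h v = 0"
proof -
  have "br (br x y) v = 0"
    if b: "\<beta> \<in> root_cls \<alpha>" and x: "x \<in> root_sp \<beta>" and y: "y \<in> root_sp (\<lambda>h. - \<beta> h)" for \<beta> x y
  proof -
    have "br (br x' y') v \<in> {0}"
      if "x' \<in> root_sp \<beta>" "x' \<in> Lg p" "y' \<in> root_sp (\<lambda>h. - \<beta> h)" "y' \<in> Lg q" for x' y' p q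
      using linear_image_span_subspace[OF bracket_linear_right subspace_single_0 _
          root_space_graded[OF v]]
        H_part_generator_other_class_homogeneous[OF a(1) b a(2,3) that] by blast
    then have "br (br x y) v \<in> {0}"
      using bilinear_span_subspace[OF bracket_bracket_linear subspace_single_0 _
          root_space_graded[OF x] root_space_graded[OF y]] by blast
    then show ?thesis by simp
  qed
  then have "br h v \<in> {0}"
    using linear_image_span_subspace[OF bracket_linear_left subspace_single_0 _
        h[unfolded H_part_def]]
    by blast
  then show ?thesis by simp
qed

lemma L_part_eq_span: "Lpart C = span (Hpart C \<union> (\<Union>\<beta>\<in>C. root_sp \<beta>))"
  unfolding span_Un L_part_def span_eq_iff[THEN iffD2, OF H_part_subspace] V_part_def ..

lemma L_part_subspace: "subspace (Lpart C)"
  unfolding L_part_eq_span by simp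

lemma H_part_L_part: "x \<in> Hpart C \<Longrightarrow> x \<in> Lpart C"
  unfolding L_part_eq_span by (simp add: span_base)

lemma root_space_L_part: "\<beta> \<in> C \<Longrightarrow> x \<in> root_sp \<beta> \<Longrightarrow> x \<in> Lpart C"
  unfolding L_part_eq_span by (rule span_base) blast

lemma H_part_graded: "Hpart C \<subseteq> span (\<Union>g. Hpart C \<inter> Lg g)"
proof -
  have "br x y \<in> span (\<Union>g. Hpart C \<inter> Lg g)"
    if "\<beta> \<in> C" "x \<in> root_sp \<beta>" "y \<in> root_sp (\<lambda>h. - \<beta> h)" for \<beta> x y
  proof (rule bracket_span_subspace[OF subspace_span])
    show "x \<in> span (\<Union>g. root_sp \<beta> \<inter> Lg g)" "y \<in> span (\<Union>g. root_sp (\<lambda>h. - \<beta> h) \<inter> Lg g)"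
      using root_space_graded that by blast+
    fix x' y' assume "x' \<in> (\<Union>g. root_sp \<beta> \<inter> Lg g)" "y' \<in> (\<Union>g. root_sp (\<lambda>h. - \<beta> h) \<inter> Lg g)"
    then obtain a b where xy: "x' \<in> root_sp \<beta>" "x' \<in> Lg a" "y' \<in> root_sp (\<lambda>h. - \<beta> h)" "y' \<in> Lg b"
      by blast
    then have "br x' y' \<in> Hpart C \<inter> Lg (a + b)"
      using bracket_in_H_part[OF \<open>\<beta> \<in> C\<close> xy(1,3)] bracket_grading[OF xy(2,4)] by blast
    then show "br x' y' \<in> span (\<Union>g. Hpart C \<inter> Lg g)" by (intro span_base) blast
  qed
  then show ?thesis unfolding H_part_def[of sc Lg br phi H C] by (intro span_minimal) auto
qed

lemma L_part_graded: "Lpart C \<subseteq> span (\<Union>g. Lpart C \<inter> Lg g)"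
proof -
  have "span (\<Union>g. Hpart C \<inter> Lg g) \<subseteq> span (\<Union>g. Lpart C \<inter> Lg g)"
    by (rule span_mono) (auto intro: H_part_L_part)
  then have "Hpart C \<subseteq> span (\<Union>g. Lpart C \<inter> Lg g)" using H_part_graded by blast
  moreover have "root_sp \<beta> \<subseteq> span (\<Union>g. Lpart C \<inter> Lg g)" if "\<beta> \<in> C" for \<beta>
  proof -
    have "span (\<Union>g. root_sp \<beta> \<inter> Lg g) \<subseteq> span (\<Union>g. Lpart C \<inter> Lg g)"
      by (rule span_mono) (auto intro: root_space_L_part[OF that])
    then show ?thesis using root_space_graded by blast
  qed
  ultimately show ?thesis unfolding L_part_eq_span[of C] by (intro span_minimal) auto
qed

lemma bracket_root_space_H: "x \<in> root_sp \<beta> \<Longrightarrow> \<beta> \<in> dual \<Longrightarrow> y \<in> H \<Longrightarrow> br x y \<in> root_sp (shift \<beta> 1)"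
  using bracket_root_spaces[OF _ H_root_space_zero, of x \<beta> y] by simp

lemma bracket_H_root_space: "x \<in> H \<Longrightarrow> y \<in> root_sp \<beta> \<Longrightarrow> br x y \<in> root_sp (shift \<beta> 1)"
  using bracket_root_spaces[OF H_root_space_zero, of x y \<beta>] by simp

lemma bracket_root_spaces_L_part:
  assumes a: "\<alpha> \<in> \<Lambda>" "\<beta> \<in> root_cls \<alpha>" "\<delta> \<in> \<Lambda>" and u: "u \<in> root_sp \<beta>" and w: "w \<in> root_sp \<delta>"
  shows "br u w \<in> Lpart (root_cls \<alpha>)"
  using shift_sum_cases[OF root_class_roots[OF a(2)] a(3)]
proof cases
  case 1
  show ?thesis
    by (rule root_space_L_part[OF root_class_sum(2)[OF a 1] bracket_root_spaces[OF u w]])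
next
  case 2
  then show ?thesis using H_part_L_part bracket_in_H_part[OF a(2) u] w by simp
next
  case 3
  then show ?thesis using bracket_root_spaces[OF u w] subspace_0[OF L_part_subspace] by simp
qed

lemma bracket_H_part_L_part:
  assumes a: "\<alpha> \<in> \<Lambda>" and u: "u \<in> Hpart (root_cls \<alpha>)" and w: "w \<in> H \<union> (\<Union>\<delta>\<in>\<Lambda>. root_sp \<delta>)"
  shows "br u w \<in> Lpart (root_cls \<alpha>)"
proof -
  have uH: "u \<in> H" using u H_part_H by blast
  have z: "0 \<in> Lpart (root_cls \<alpha>)" using subspace_0[OF L_part_subspace] .
  consider "w \<in> H" | \<delta> where "\<delta> \<in> \<Lambda>" "w \<in> root_sp \<delta>" using w by blast
  then show ?thesis
  proof cases
    case 1
    then show ?thesis using H_abelian uH z by simp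
  next
    case (2 \<delta>)
    show ?thesis
    proof (cases "\<delta> \<in> root_cls \<alpha>")
      case True
      show ?thesis
        by (rule root_space_L_part[OF root_class_shift1[OF a True]
              bracket_H_root_space[OF uH 2(2)]])
    next
      case False
      then show ?thesis using H_part_other_class[OF a 2(1) False u 2(2)] z by simp
    qed
  qed
qed

lemma L_part_class_bracket_closed:
  assumes a: "\<alpha> \<in> \<Lambda>" and x: "x \<in> Lpart (root_cls \<alpha>)"
  shows "br x y \<in> Lpart (root_cls \<alpha>)"
proof (rule bracket_span_subspace[OF L_part_subspace])
  show "x \<in> span (Hpart (root_cls \<alpha>) \<union> (\<Union>\<beta>\<in>root_cls \<alpha>. root_sp \<beta>))"
    using x unfolding L_part_eq_span .
  show "y \<in> span (H \<union> (\<Union>\<delta>\<in>\<Lambda>. root_sp \<delta>))" using split_spans by simp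
next
  fix u w assume u: "u \<in> Hpart (root_cls \<alpha>) \<union> (\<Union>\<beta>\<in>root_cls \<alpha>. root_sp \<beta>)"
    and w: "w \<in> H \<union> (\<Union>\<delta>\<in>\<Lambda>. root_sp \<delta>)"
  consider "u \<in> Hpart (root_cls \<alpha>)" | \<beta> where "\<beta> \<in> root_cls \<alpha>" "u \<in> root_sp \<beta>" using u by blast
  then show "br u w \<in> Lpart (root_cls \<alpha>)"
  proof cases
    case 1
    then show ?thesis using bracket_H_part_L_part[OF a _ w] by blast
  next
    case (2 \<beta>)
    consider "w \<in> H" | \<delta> where "\<delta> \<in> \<Lambda>" "w \<in> root_sp \<delta>" using w by blast
    then show ?thesis
    proof cases
      case 1
      have "br u w \<in> root_sp (shift \<beta> 1)"
        using bracket_root_space_H[OF 2(2) roots_dual[OF root_class_roots[OF 2(1)]] 1] .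
      then show ?thesis using root_space_L_part[OF root_class_shift1[OF a 2(1)]] by blast
    next
      case (2 \<delta>)
      then show ?thesis
        using bracket_root_spaces_L_part[OF a _ _ _ 2(2)] \<open>\<beta> \<in> root_cls \<alpha>\<close> \<open>u \<in> root_sp \<beta>\<close>
        by blast
    qed
  qed
qed

lemma unshift_uminus: "unshift (\<lambda>x. - \<beta> x) = (\<lambda>x. - unshift \<beta> x)"
  unfolding unshift_def by (rule ext) simp

lemma phi_H_part:
  assumes a: "\<alpha> \<in> \<Lambda>" and x: "x \<in> Hpart (root_cls \<alpha>)"
  shows "phi x \<in> Hpart (root_cls \<alpha>)"
proof (rule linear_image_span_subspace[OF phi_linear H_part_subspace _ x[unfolded H_part_def]])
  fix w assume "w \<in> {br x y | x y \<beta>. \<beta> \<in> root_cls \<alpha> \<and> x \<in> root_sp \<beta> \<and> y \<in> root_sp (\<lambda>h. - \<beta> h)}"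
  then obtain u v \<beta> where b: "w = br u v" "\<beta> \<in> root_cls \<alpha>" "u \<in> root_sp \<beta>" "v \<in> root_sp (\<lambda>h. - \<beta> h)"
    by blast
  have "phi v \<in> root_sp (\<lambda>h. - shift \<beta> 1 h)"
    using phi_root_space[OF b(4)] by (simp add: shift_uminus)
  then show "phi w \<in> Hpart (root_cls \<alpha>)" unfolding b(1) phi_bracket
    by (rule bracket_in_H_part[OF root_class_shift1[OF a b(2)] phi_root_space[OF b(3)]])
qed

lemma phi_inv_H_part:
  assumes a: "\<alpha> \<in> \<Lambda>" and x: "x \<in> Hpart (root_cls \<alpha>)"
  shows "phi_inv x \<in> Hpart (root_cls \<alpha>)"
proof (rule linear_image_span_subspace[OF phi_inv_linear H_part_subspace _ x[unfolded H_part_def]])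
  fix w assume "w \<in> {br x y | x y \<beta>. \<beta> \<in> root_cls \<alpha> \<and> x \<in> root_sp \<beta> \<and> y \<in> root_sp (\<lambda>h. - \<beta> h)}"
  then obtain u v \<beta> where b: "w = br u v" "\<beta> \<in> root_cls \<alpha>" "u \<in> root_sp \<beta>" "v \<in> root_sp (\<lambda>h. - \<beta> h)"
    by blast
  have "phi_inv v \<in> root_sp (\<lambda>h. - unshift \<beta> h)"
    using phi_inv_root_space[OF b(4)] by (simp add: unshift_uminus)
  then show "phi_inv w \<in> Hpart (root_cls \<alpha>)" unfolding b(1) phi_inv_bracket
    by (rule bracket_in_H_part[OF root_class_unshift[OF a b(2)] phi_inv_root_space[OF b(3)]])
qed

lemma phi_L_part:
  assumes a: "\<alpha> \<in> \<Lambda>" and x: "x \<in> Lpart (root_cls \<alpha>)"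
  shows "phi x \<in> Lpart (root_cls \<alpha>)"
proof (rule linear_image_span_subspace[OF phi_linear L_part_subspace _ x[unfolded L_part_eq_span]])
  fix w assume "w \<in> Hpart (root_cls \<alpha>) \<union> (\<Union>\<beta>\<in>root_cls \<alpha>. root_sp \<beta>)"
  then consider "w \<in> Hpart (root_cls \<alpha>)" | \<beta> where "\<beta> \<in> root_cls \<alpha>" "w \<in> root_sp \<beta>" by blast
  then show "phi w \<in> Lpart (root_cls \<alpha>)"
  proof cases
    case 1
    then show ?thesis using H_part_L_part phi_H_part[OF a] by blast
  next
    case (2 \<beta>)
    show ?thesis using root_space_L_part[OF root_class_shift1[OF a 2(1)] phi_root_space[OF 2(2)]] .
  qed
qed

lemma phi_inv_L_part:
  assumes a: "\<alpha> \<in> \<Lambda>" and x: "x \<in> Lpart (root_cls \<alpha>)"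
  shows "phi_inv x \<in> Lpart (root_cls \<alpha>)"
proof (rule linear_image_span_subspace[OF phi_inv_linear L_part_subspace _
      x[unfolded L_part_eq_span]])
  fix w assume "w \<in> Hpart (root_cls \<alpha>) \<union> (\<Union>\<beta>\<in>root_cls \<alpha>. root_sp \<beta>)"
  then consider "w \<in> Hpart (root_cls \<alpha>)" | \<beta> where "\<beta> \<in> root_cls \<alpha>" "w \<in> root_sp \<beta>" by blast
  then show "phi_inv w \<in> Lpart (root_cls \<alpha>)"
  proof cases
    case 1
    then show ?thesis using H_part_L_part phi_inv_H_part[OF a] by blast
  next
    case (2 \<beta>)
    show ?thesis
      using root_space_L_part[OF root_class_unshift[OF a 2(1)] phi_inv_root_space[OF 2(2)]] .
  qed
qed

lemma phi_image_L_part: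
  assumes "\<alpha> \<in> \<Lambda>" shows "phi ` Lpart (root_cls \<alpha>) = Lpart (root_cls \<alpha>)"
proof
  show "phi ` Lpart (root_cls \<alpha>) \<subseteq> Lpart (root_cls \<alpha>)" using phi_L_part[OF assms] by blast
  show "Lpart (root_cls \<alpha>) \<subseteq> phi ` Lpart (root_cls \<alpha>)"
    using phi_inv_L_part[OF assms] by (metis image_eqI phi_phi_inv subsetI)
qed

lemma L_part_class_ideal: "\<alpha> \<in> \<Lambda> \<Longrightarrow> ideal sc Lg br phi (Lpart (root_cls \<alpha>))"
  unfolding ideal_def graded_subspace_def
  using L_part_subspace L_part_graded L_part_class_bracket_closed phi_image_L_part by simp

lemma root_space_other_class_H_part:
  assumes a: "\<alpha> \<in> \<Lambda>" "\<delta> \<in> \<Lambda>" "\<delta> \<notin> root_cls \<alpha>"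
    and v: "v \<in> root_sp \<delta>" and h: "h \<in> Hpart (root_cls \<alpha>)"
  shows "br v h = 0"
proof -
  have "br v h \<in> {0}"
  proof (rule bracket_span_subspace[OF subspace_single_0])
    show "v \<in> span (\<Union>g. root_sp \<delta> \<inter> Lg g)" using root_space_graded[OF v] .
    show "h \<in> span (\<Union>g. Hpart (root_cls \<alpha>) \<inter> Lg g)" using H_part_graded h by blast
  next
    fix v' h' assume "v' \<in> (\<Union>g. root_sp \<delta> \<inter> Lg g)" "h' \<in> (\<Union>g. Hpart (root_cls \<alpha>) \<inter> Lg g)"
    then obtain g k where "v' \<in> root_sp \<delta>" "v' \<in> Lg g" "h' \<in> Hpart (root_cls \<alpha>)" "h' \<in> Lg k"
      by blast
    then show "br v' h' \<in> {0}" using bracket_skew[of v' g h' k] H_part_other_class[OF a, of h' v']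
      by simp
  qed
  then show ?thesis by simp
qed

lemma L_part_classes_commute:
  assumes a: "\<alpha> \<in> \<Lambda>" "\<gamma> \<in> \<Lambda>" "root_cls \<alpha> \<noteq> root_cls \<gamma>"
    and x: "x \<in> Lpart (root_cls \<alpha>)" and y: "y \<in> Lpart (root_cls \<gamma>)"
  shows "br x y = 0"
proof -
  have other: "\<delta> \<notin> root_cls \<alpha>" if "\<delta> \<in> root_cls \<gamma>" for \<delta>
    using root_class_disjoint[OF a(2,1) _ that] a(3) by metis
  have "br x y \<in> {0}"
  proof (rule bracket_span_subspace[OF subspace_single_0 _
        x[unfolded L_part_eq_span] y[unfolded L_part_eq_span]])
    fix u w assume u: "u \<in> Hpart (root_cls \<alpha>) \<union> (\<Union>\<beta>\<in>root_cls \<alpha>. root_sp \<beta>)"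
      and w: "w \<in> Hpart (root_cls \<gamma>) \<union> (\<Union>\<delta>\<in>root_cls \<gamma>. root_sp \<delta>)"
    consider (HH) "u \<in> Hpart (root_cls \<alpha>)" "w \<in> Hpart (root_cls \<gamma>)"
      | (HR) \<delta> where "u \<in> Hpart (root_cls \<alpha>)" "\<delta> \<in> root_cls \<gamma>" "w \<in> root_sp \<delta>"
      | (RH) \<beta> where "\<beta> \<in> root_cls \<alpha>" "u \<in> root_sp \<beta>" "w \<in> Hpart (root_cls \<gamma>)"
      | (RR) \<beta> \<delta> where "\<beta> \<in> root_cls \<alpha>" "u \<in> root_sp \<beta>" "\<delta> \<in> root_cls \<gamma>" "w \<in> root_sp \<delta>"
      using u w by blast
    then show "br u w \<in> {0}"
    proof cases
      case HH
      then show ?thesis using H_part_H H_abelian by blast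
    next
      case (HR \<delta>)
      then show ?thesis
        using H_part_other_class[OF a(1) root_class_roots[OF HR(2)] other[OF HR(2)] HR(1,3)] by simp
    next
      case (RH \<beta>)
      have "\<beta> \<notin> root_cls \<gamma>" using root_class_disjoint[OF a RH(1)] .
      then show ?thesis
        using root_space_other_class_H_part[OF a(2) root_class_roots[OF RH(1)] _ RH(2,3)] by simp
    next
      case (RR \<beta> \<delta>)
      then show ?thesis
        using bracket_root_spaces_other_class[OF a(1) RR(1) root_class_roots[OF RR(3)]
            other[OF RR(3)]
            RR(2,4)] by simp
    qed
  qed
  then show ?thesis by simp
qed

abbreviation "root_classes \<equiv> {root_cls \<alpha> | \<alpha>. \<alpha> \<in> \<Lambda>}"

lemma L_part_classes_span:
  assumes perfect: "derived sc br = UNIV"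
  shows "span (\<Union>C\<in>root_classes. Lpart C) = UNIV"
proof -
  define Z where "Z = span (\<Union>C\<in>root_classes. Lpart C)"
  have LZ: "w \<in> Z" if "\<beta> \<in> \<Lambda>" "w \<in> Lpart (root_cls \<beta>)" for \<beta> w
    unfolding Z_def using that by (blast intro: span_base)
  have rZ: "w \<in> Z" if "\<beta> \<in> \<Lambda>" "w \<in> root_sp \<beta>" for \<beta> w
    using LZ[OF that(1) root_space_L_part[OF root_class_self[OF that(1)] that(2)]] .
  have "br x y \<in> Z" for x y
  proof (rule bracket_span_subspace)
    show "subspace Z" unfolding Z_def by simp
    show "x \<in> span (H \<union> (\<Union>\<delta>\<in>\<Lambda>. root_sp \<delta>))" "y \<in> span (H \<union> (\<Union>\<delta>\<in>\<Lambda>. root_sp \<delta>))"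
      using split_spans by simp_all
  next
    fix u w assume u: "u \<in> H \<union> (\<Union>\<delta>\<in>\<Lambda>. root_sp \<delta>)" and w: "w \<in> H \<union> (\<Union>\<delta>\<in>\<Lambda>. root_sp \<delta>)"
    consider (HH) "u \<in> H" "w \<in> H"
      | (HR) \<delta> where "u \<in> H" "\<delta> \<in> \<Lambda>" "w \<in> root_sp \<delta>"
      | (RH) \<beta> where "\<beta> \<in> \<Lambda>" "u \<in> root_sp \<beta>" "w \<in> H"
      | (RR) \<beta> \<delta> where "\<beta> \<in> \<Lambda>" "u \<in> root_sp \<beta>" "\<delta> \<in> \<Lambda>" "w \<in> root_sp \<delta>"
      using u w by blast
    then show "br u w \<in> Z"
    proof cases
      case HH
      then show ?thesis using H_abelian span_zero unfolding Z_def by simp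
    next
      case (HR \<delta>)
      show ?thesis using rZ[OF shift_roots[OF HR(2)] bracket_H_root_space[OF HR(1,3)]] .
    next
      case (RH \<beta>)
      show ?thesis
        using rZ[OF shift_roots[OF RH(1)]
            bracket_root_space_H[OF RH(2) roots_dual[OF RH(1)] RH(3)]] .
    next
      case (RR \<beta> \<delta>)
      show ?thesis
        using LZ[OF RR(1)
            bracket_root_spaces_L_part[OF RR(1) root_class_self[OF RR(1)] RR(3,2,4)]] .
    qed
  qed
  then have "span {br x y | x y. True} \<subseteq> Z" unfolding Z_def by (intro span_minimal) auto
  then show ?thesis using perfect unfolding derived_def Z_def by auto
qed

lemma root_classes_subset: "C \<in> root_classes \<Longrightarrow> C \<subseteq> \<Lambda>"
  using root_class_roots by blast

lemma root_classes_disjoint: "C \<in> root_classes \<Longrightarrow> C' \<in> root_classes \<Longrightarrow> C \<noteq> C' \<Longrightarrow> C \<inter> C' = {}"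
  using root_class_disjoint by blast

lemma V_part_span_mono: "C \<subseteq> X \<Longrightarrow> x \<in> Vpart C \<Longrightarrow> x \<in> span (\<Union>\<beta>\<in>X. root_sp \<beta>)"
  unfolding V_part_def using span_mono[of "\<Union>\<beta>\<in>C. root_sp \<beta>" "\<Union>\<beta>\<in>X. root_sp \<beta>"] by blast

text \<open>An element of \<open>H\<^sub>C\<^sub>0\<close> kills the root spaces outside \<open>C\<^sub>0\<close>; if it is also a sum of elements
  of the other \<open>H\<^sub>C\<close>, it kills the root spaces inside \<open>C\<^sub>0\<close> as well, hence all of \<open>L\<close>.\<close>
lemma H_part_sum_other_classes_annihilator:
  assumes C0: "C0 \<in> root_classes" and G: "G \<subseteq> root_classes - {C0}"
    and h: "\<forall>C\<in>G. h C \<in> Hpart C" and h0: "h0 \<in> Hpart C0" "h0 = - sum h G"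
  shows "h0 \<in> annihilator br"
proof -
  obtain \<alpha> where \<alpha>: "\<alpha> \<in> \<Lambda>" "C0 = root_cls \<alpha>" using C0 by blast
  have "br h0 y \<in> {0}" for y
  proof (rule linear_image_span_subspace[OF bracket_linear_right subspace_single_0])
    show "y \<in> span (H \<union> (\<Union>\<delta>\<in>\<Lambda>. root_sp \<delta>))" using split_spans by simp
  next
    fix u assume "u \<in> H \<union> (\<Union>\<delta>\<in>\<Lambda>. root_sp \<delta>)"
    then consider "u \<in> H" | \<delta> where "\<delta> \<in> \<Lambda>" "u \<in> root_sp \<delta>" by blast
    then show "br h0 u \<in> {0}"
    proof cases
      case 1
      then show ?thesis using H_abelian H_part_H h0(1) by blast
    next
      case (2 \<delta>)
      show ?thesis
      proof (cases "\<delta> \<in> C0")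
        case False
        then show ?thesis using H_part_other_class[OF \<alpha>(1) 2(1) _ _ 2(2)] h0(1) \<alpha>(2) by simp
      next
        case True
        have "br (h C) u = 0" if C: "C \<in> G" for C
        proof -
          obtain \<gamma> where \<gamma>: "\<gamma> \<in> \<Lambda>" "C = root_cls \<gamma>" using C G by blast
          have "\<delta> \<notin> C" using root_classes_disjoint[OF _ C0, of C] C G True by blast
          then show ?thesis using H_part_other_class[OF \<gamma>(1) 2(1) _ _ 2(2)] h C \<gamma>(2) by simp
        qed
        then show ?thesis unfolding h0(2) by (simp add: bracket_uminus_left bracket_sum_left)
      qed
    qed
  qed
  then show ?thesis unfolding annihilator_def by simp
qed

lemma L_part_classes_independent:
  assumes centerless: "annihilator br = {0}"
    and F: "finite F" "F \<subseteq> root_classes" and w: "\<forall>C\<in>F. w C \<in> Lpart C" and s: "sum w F = 0"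
    and C0: "C0 \<in> F"
  shows "w C0 = 0"
proof -
  have "\<forall>C\<in>F. \<exists>p. fst p \<in> Hpart C \<and> snd p \<in> Vpart C \<and> w C = fst p + snd p"
  proof
    fix C assume "C \<in> F"
    then obtain h v where "h \<in> Hpart C" "v \<in> Vpart C" "w C = h + v" using w unfolding L_part_def
      by blast
    then show "\<exists>p. fst p \<in> Hpart C \<and> snd p \<in> Vpart C \<and> w C = fst p + snd p"
      by (intro exI[of _ "(h, v)"]) simp
  qed
  from bchoice[OF this] obtain p
    where p: "\<forall>C\<in>F. fst (p C) \<in> Hpart C \<and> snd (p C) \<in> Vpart C \<and> w C = fst (p C) + snd (p C)"
    by blast
  define h where "h C = fst (p C)" for C
  define v where "v C = snd (p C)" for C
  have h: "\<forall>C\<in>F. h C \<in> Hpart C" and v: "\<forall>C\<in>F. v C \<in> Vpart C"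
    and wC: "\<forall>C\<in>F. w C = h C + v C"
    using p unfolding h_def v_def by auto
  have sum_hv: "sum v F = - sum h F"
    using s sum.cong[OF refl, of F w "\<lambda>C. h C + v C"] wC
    by (simp add: sum.distrib eq_neg_iff_add_eq_0 add.commute)
  have "sum h F \<in> H"
  proof (rule subspace_sum[OF H_subspace])
    fix C assume "C \<in> F"
    then show "h C \<in> H" using h H_part_H by blast
  qed
  then have "sum v F \<in> H" unfolding sum_hv by (rule subspace_neg[OF H_subspace])
  moreover have "sum v F \<in> span (\<Union>\<beta>\<in>\<Lambda>. root_sp \<beta>)"
  proof (rule span_sum)
    fix C assume C: "C \<in> F"
    then have "C \<in> root_classes" using F(2) by blast
    then show "v C \<in> span (\<Union>\<beta>\<in>\<Lambda>. root_sp \<beta>)"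
      using V_part_span_mono[OF root_classes_subset] v C by blast
  qed
  ultimately have v0: "sum v F = 0" by (rule H_root_spaces_disjoint)
  then have h0: "sum h F = 0" using sum_hv by simp
  have C0I: "C0 \<in> root_classes" using C0 F(2) by blast
  have others: "F - {C0} \<subseteq> root_classes - {C0}" using F(2) by blast
  have "v C0 = - sum v (F - {C0})" using v0 sum.remove[OF F(1) C0, of v]
    by (simp add: eq_neg_iff_add_eq_0)
  moreover have "sum v (F - {C0}) \<in> span (\<Union>\<beta>\<in>\<Lambda> - C0. root_sp \<beta>)"
  proof (rule span_sum)
    fix C assume C: "C \<in> F - {C0}"
    then have CI: "C \<in> root_classes" "C \<noteq> C0" using others by blast+
    then have "C \<inter> C0 = {}" using root_classes_disjoint[OF _ C0I] by blast
    then have sub: "C \<subseteq> \<Lambda> - C0" using root_classes_subset[OF CI(1)] by blast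
    show "v C \<in> span (\<Union>\<beta>\<in>\<Lambda> - C0. root_sp \<beta>)" using V_part_span_mono[OF sub] v C by blast
  qed
  ultimately have "v C0 \<in> span (\<Union>\<beta>\<in>\<Lambda> - C0. root_sp \<beta>)" by (simp add: span_neg)
  moreover have "v C0 \<in> span (\<Union>\<beta>\<in>C0. root_sp \<beta>)" using v C0 unfolding V_part_def by blast
  ultimately have "v C0 = 0"
    by (intro root_spaces_disjoint[OF root_classes_subset[OF C0I] Diff_subset]) auto
  moreover have "h C0 = - sum h (F - {C0})"
    using h0 sum.remove[OF F(1) C0, of h] by (simp add: eq_neg_iff_add_eq_0)
  then have "h C0 \<in> annihilator br"
    by (intro H_part_sum_other_classes_annihilator[OF C0I others]) (use h C0 in auto)
  ultimately show "w C0 = 0" using wC C0 centerless by simp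
qed

lemma L_part_classes_direct_sum:
  assumes "annihilator br = {0}" and "derived sc br = UNIV"
  shows "internal_direct_sum sc root_classes Lpart UNIV"
  unfolding internal_direct_sum_def
  using L_part_subspace L_part_classes_span[OF assms(2)] L_part_classes_independent[OF assms(1)]
  by blast

end

theorem mainTheorem11:
  fixes sc :: "'k::field \<Rightarrow> 'v::ab_group_add \<Rightarrow> 'v"
    and Lg :: "'g::ab_group_add \<Rightarrow> 'v set"
    and br :: "'v \<Rightarrow> 'v \<Rightarrow> 'v" and phi :: "'v \<Rightarrow> 'v"
    and eps :: "'g \<Rightarrow> 'g \<Rightarrow> 'k" and H :: "'v set"
  assumes "regular_hlca sc Lg br phi eps"
    and "max_abelian_subalgebra sc Lg br phi H"
    and "split_wrt sc Lg br phi H"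
    and "symmetric_roots sc Lg br phi H"
    and "annihilator br = {0}"
    and "derived sc br = UNIV"
  shows "internal_direct_sum sc
           {root_class sc Lg br phi H \<alpha> | \<alpha>. \<alpha> \<in> roots sc Lg br phi H}
           (L_part sc Lg br phi H) UNIV
       \<and> (\<forall>\<alpha>\<in>roots sc Lg br phi H.
            ideal sc Lg br phi (L_part sc Lg br phi H (root_class sc Lg br phi H \<alpha>)))
       \<and> (\<forall>\<alpha>\<in>roots sc Lg br phi H. \<forall>\<beta>\<in>roots sc Lg br phi H.
            root_class sc Lg br phi H \<alpha> \<noteq> root_class sc Lg br phi H \<beta> \<longrightarrow>
            (\<forall>x\<in>L_part sc Lg br phi H (root_class sc Lg br phi H \<alpha>).
             \<forall>y\<in>L_part sc Lg br phi H (root_class sc Lg br phi H \<beta>). br x y = 0))"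
proof -
  have "vector_space sc"
    using assms(1) unfolding regular_hlca_def hom_lie_color_algebra_def by (elim conjE)
  then interpret split_regular_hom_lie_color_algebra sc Lg br phi eps H
    using assms(1-4)
    by (intro split_regular_hom_lie_color_algebra.intro regular_hom_lie_color_algebra.intro
        split_regular_hom_lie_color_algebra_axioms.intro regular_hom_lie_color_algebra_axioms.intro)
  show ?thesis
    using L_part_classes_direct_sum[OF assms(5,6)] L_part_class_ideal L_part_classes_commute
    by blast
qed

end
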